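(* Let $n\ge 1$, let $\lambda=(\lambda_1>\lambda_2>\cdots>\lambda_n\ge 1)$ and $\mu=(\mu_1>\cdots>\mu_{n-1}\ge 1)$ be strictly decreasing sequences of positive integers, and let $k>\lambda_1$ be an integer. Put $r(\lambda;\mu)=|\{1\le i\le n-1:\mu_i=\lambda_{i+1}\}|$, $l(\lambda;\mu)=|\{1\le i\le n-1:\mu_i=\lambda_i\}|$, $s(\lambda;\mu)=|\{1\le i\le n-1:\lambda_i>\mu_i\}|$, and $|\lambda|=\sum_i\lambda_i$, $|\mu|=\sum_i\mu_i$. Then $$\langle \mu| e^{\phi_+(x;t)}\psi_{-1/2}|\lambda\rangle=\begin{cases}(-1)^n t^{r(\lambda;\mu)}(1+t)^{s(\lambda;\mu)-r(\lambda;\mu)+1}x^{|\lambda|-|\mu|}&\text{if }\lambda_i\ge\mu_i\ge\lambda_{i+1}\text{ for all }1\le i\le n-1,\\ 0&\text{otherwise,}\end{cases}$$ and $$\langle \mu| \psi_{k-1/2}\,e^{\phi_-(x;t)}|\lambda\rangle=\begin{cases} t^{l(\lambda;\mu)}(1+t)^{s(\lambda;\mu)-r(\lambda;\mu)+1}x^{|\lambda|-|\mu|-k}&\text{if }\lambda_i\ge\mu_i\ge\lambda_{i+1}\text{ for all }1\le i\le n-1,\\ 0&\text{otherwise.}\end{cases}$$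
   Context: Let $\mathcal A$ be the associative $\mathbb C$-algebra generated by $\psi_i,\psi_i^*$, $i\in\mathbb Z+\tfrac12$, with relations $\psi_i\psi_j+\psi_j\psi_i=0$, $\psi_i^*\psi_j^*+\psi_j^*\psi_i^*=0$, $\psi_i\psi_j^*+\psi_j^*\psi_i=\delta_{ij}$. The Fock space is the left $\mathcal A$-module generated by a vacuum $|0\rangle$ with $\psi_i^*|0\rangle=0$ for $i<0$ and $\psi_i|0\rangle=0$ for $i>0$; the dual Fock space is the right module generated by $\langle 0|$ with $\langle 0|\psi_i^*=0$ for $i>0$ and $\langle0|\psi_i=0$ for $i<0$; there is the vacuum-expectation pairing $\langle 0|a\cdot b|0\rangle$ with $\langle0|0\rangle=1$, and $\langle u|X|v\rangle$ denotes the pairing of the bra $\langle u|$ with $X|v\rangle$. (Pictorially, $|0\rangle$ has particles at all negative half-integers; $\psi_i^*$ creates and $\psi_i$ destroys a particle at $i$.) For $m\neq0$ let $J_m=\sum_{i\in\mathbb Z+1/2}\psi^*_{i-m}\psi_i$. For formal variables $x,t$ define $e^{\phi_+(x;t)}=\exp\big(\sum_{q\ge1}\tfrac{1-(-t)^q}{q}x^qJ_q\big)$ and $e^{\phi_-(x;t)}=\exp\big(\sum_{q\ge1}\tfrac{1-(-t)^q}{q}x^{-q}J_{-q}\big)$. For a strictly decreasing sequence of positive integers $\lambda=(\lambda_1>\cdots>\lambda_n)$ ($n\ge0$) set $|\lambda\rangle=\psi^*_{\lambda_1-1/2}\psi^*_{\lambda_2-1/2}\cdots\psi^*_{\lambda_n-1/2}|0\rangle$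 and $\langle\lambda|=\langle0|\psi_{\lambda_n-1/2}\cdots\psi_{\lambda_1-1/2}$; for $n=0$ (the empty partition $\emptyset$) these are $|0\rangle$ and $\langle 0|$. *)

theory Defs
  imports Complex_Main
begin

(* Encoding: the integer a represents the half-integer a - 1/2.
   A basis vector is a Maya set S \<subseteq> int (set of occupied positions);
   the vacuum is {a. a \<le> 0}, i.e. all negative half-integers occupied. *)

type_synonym fvec = "int set \<Rightarrow> complex"

definition vac_set :: "int set" where
  "vac_set = {a. a \<le> 0}"

definition vac :: fvec where
  "vac = (\<lambda>T. if T = vac_set then 1 else 0)"

definition wsign :: "int set \<Rightarrow> int \<Rightarrow> complex" where
  "wsign S a = (-1) ^ card {j \<in> S. a < j}"

(* psi_{a-1/2}: destroys a particle at a *)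
definition psi :: "int \<Rightarrow> fvec \<Rightarrow> fvec" where
  "psi a v = (\<lambda>T. if a \<in> T then 0 else wsign T a * v (insert a T))"

(* psi^*_{a-1/2}: creates a particle at a *)
definition psistar :: "int \<Rightarrow> fvec \<Rightarrow> fvec" where
  "psistar a v = (\<lambda>T. if a \<in> T then wsign (T - {a}) a * v (T - {a}) else 0)"

definition fsum :: "(int \<Rightarrow> complex) \<Rightarrow> complex" where
  "fsum f = sum f {i. f i \<noteq> 0}"

definition Jop :: "int \<Rightarrow> fvec \<Rightarrow> fvec" where
  "Jop m v = (\<lambda>T. fsum (\<lambda>i. psistar (i - m) (psi i v) T))"

fun apply_ops :: "(nat \<Rightarrow> fvec \<Rightarrow> fvec) \<Rightarrow> nat list \<Rightarrow> fvec \<Rightarrow> fvec" where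
  "apply_ops A [] v = v"
| "apply_ops A (q # qs) v = A q (apply_ops A qs v)"

definition comps :: "nat \<Rightarrow> nat list set" where
  "comps d = {qs. sum_list qs = d \<and> 0 \<notin> set qs}"

(* coefficient of y^d in exp(\<Sum>_{q\<ge>1} c q * y^q * A q), expanding
   exp(X) = \<Sum>_j X^j / j! *)
definition exp_coeff :: "(nat \<Rightarrow> fvec \<Rightarrow> fvec) \<Rightarrow> (nat \<Rightarrow> complex) \<Rightarrow> nat \<Rightarrow> fvec \<Rightarrow> fvec" where
  "exp_coeff A c d v =
     (\<lambda>T. \<Sum>qs\<in>comps d. (\<Prod>q\<leftarrow>qs. c q) / fact (length qs) * apply_ops A qs v T)"

definition phi_coef :: "complex \<Rightarrow> nat \<Rightarrow> complex" where
  "phi_coef t q = (1 - (-t) ^ q) / of_nat q"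

(* coefficient of x^e (e \<in> \<int>) of e^{phi_+(x;t)} applied to v *)
definition ephi_plus :: "complex \<Rightarrow> int \<Rightarrow> fvec \<Rightarrow> fvec" where
  "ephi_plus t e v =
     (if e < 0 then (\<lambda>T. 0) else exp_coeff (\<lambda>q. Jop (int q)) (phi_coef t) (nat e) v)"

(* coefficient of x^e (e \<in> \<int>) of e^{phi_-(x;t)} applied to v *)
definition ephi_minus :: "complex \<Rightarrow> int \<Rightarrow> fvec \<Rightarrow> fvec" where
  "ephi_minus t e v =
     (if 0 < e then (\<lambda>T. 0) else exp_coeff (\<lambda>q. Jop (- int q)) (phi_coef t) (nat (- e)) v)"

definition ket :: "nat list \<Rightarrow> fvec" where
  "ket lam = foldr (\<lambda>a w. psistar (int a) w) lam vac"

definition bra :: "nat list \<Rightarrow> fvec \<Rightarrow> complex" where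
  "bra lam v = fold (\<lambda>a w. psi (int a) w) lam v vac_set"

(* combinatorial data, lists are 0-indexed: index i here is index i+1 in the paper *)
definition interlace :: "nat list \<Rightarrow> nat list \<Rightarrow> bool" where
  "interlace lam mu = (\<forall>i < length mu. lam ! i \<ge> mu ! i \<and> mu ! i \<ge> lam ! (i + 1))"

definition r_stat :: "nat list \<Rightarrow> nat list \<Rightarrow> nat" where
  "r_stat lam mu = card {i. i < length mu \<and> mu ! i = lam ! (i + 1)}"

definition l_stat :: "nat list \<Rightarrow> nat list \<Rightarrow> nat" where
  "l_stat lam mu = card {i. i < length mu \<and> mu ! i = lam ! i}"

definition s_stat :: "nat list \<Rightarrow> nat list \<Rightarrow> nat" where
  "s_stat lam mu = card {i. i < length mu \<and> lam ! i > mu ! i}"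

end

theory Submission
  imports Defs "HOL-Computational_Algebra.Formal_Power_Series"
begin

text \<open>
  The commutators \<open>[\<psi>\<^sub>j, J\<^sub>m] = \<psi>\<^bsub>j+m\<^esub>\<close> and \<open>[J\<^sub>m, \<psi>\<^sup>*\<^sub>j] = \<psi>\<^sup>*\<^bsub>j-m\<^esub>\<close> let a
  fermion pass through \<open>exp \<phi>\<^sub>\<plusminus>\<close> at the price of shifting its index:
  \<open>\<psi>\<^sub>j exp \<phi>\<^sub>+ = \<Sum>\<^sub>m a\<^sub>m x\<^sup>m exp \<phi>\<^sub>+ \<psi>\<^bsub>j+m\<^esub>\<close>, and symmetrically for \<open>\<psi>\<^sup>*\<close>
  and \<open>\<phi>\<^sub>-\<close>, where \<open>\<Sum> a\<^sub>m y\<^sup>m = exp (\<Sum>\<^sub>q (1 - (-t)\<^sup>q) y\<^sup>q / q) = (1 + t y) / (1 - y)\<close>,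
  i.e. \<open>a\<^sub>0 = 1\<close> and \<open>a\<^sub>m = 1 + t\<close> for \<open>m > 0\<close>.
  Peeling the particles off one basis vector in this way expresses a matrix element of
  \<open>exp \<phi>\<^sub>\<plusminus>\<close> between basis vectors as an alternating sum over the particle of the other
  vector that gets matched, with sign given by its position. This recursion has a closed form:
  it vanishes unless the two particle sequences interlace, and then every particle contributes
  \<open>1\<close>, \<open>t\<close> or \<open>1 + t\<close> according to whether it sits on its upper neighbour, on its lower
  neighbour, or strictly between them. The operators \<open>\<psi>\<^bsub>-1/2\<^esub>\<close> and \<open>\<psi>\<^bsub>k-1/2\<^esub>\<close> add
  the particle \<open>0\<close> resp. \<open>k\<close> to \<open>\<mu>\<close>, which turns the interlacing of \<open>\<lambda>\<close> and \<open>\<mu>\<close>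
  into one of two sequences of length \<open>n\<close>; counting the three kinds of factors gives the
  exponents.
\<close>

lemma sum_triangle_swap:
  fixes F :: "nat \<Rightarrow> nat \<Rightarrow> 'a::comm_monoid_add"
  shows "(\<Sum>q\<in>{1..e}. \<Sum>m\<le>e-q. F q m) = (\<Sum>m\<le>e. \<Sum>q\<in>{1..e-m}. F q m)"
proof -
  have "(\<Sum>q\<in>{1..e}. \<Sum>m\<le>e-q. F q m) = (\<Sum>q\<in>{1..e}. \<Sum>m\<in>{m. m \<in> {..e} \<and> q + m \<le> e}. F q m)"
    by (rule sum.cong[OF refl], rule sum.cong) auto
  also have "\<dots> = (\<Sum>m\<in>{..e}. \<Sum>q\<in>{q. q \<in> {1..e} \<and> q + m \<le> e}. F q m)"
    by (rule sum.swap_restrict) auto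
  also have "\<dots> = (\<Sum>m\<le>e. \<Sum>q\<in>{1..e-m}. F q m)"
    by (rule sum.cong[OF refl], rule sum.cong) auto
  finally show ?thesis .
qed

lemma sum_triangle_shift_swap:
  fixes F :: "nat \<Rightarrow> nat \<Rightarrow> 'a::comm_monoid_add"
  shows "(\<Sum>q\<in>{1..e}. \<Sum>m\<le>e-q. F q (q + m)) = (\<Sum>m\<le>e. \<Sum>q\<in>{1..m}. F q m)"
proof -
  have inner: "(\<Sum>m\<le>e-q. F q (q + m)) = (\<Sum>m\<in>{m. m \<in> {..e} \<and> q \<le> m}. F q m)" if "q \<le> e" for q
  proof -
    have "(\<Sum>m\<le>e-q. F q (q + m)) = sum (F q) ((\<lambda>m. q + m) ` {..e-q})"
      by (simp add: sum.reindex)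
    also have "(\<lambda>m. q + m) ` {..e-q} = {m. m \<in> {..e} \<and> q \<le> m}"
    proof
      show "(+) q ` {..e - q} \<subseteq> {m \<in> {..e}. q \<le> m}" using that by auto
      show "{m \<in> {..e}. q \<le> m} \<subseteq> (+) q ` {..e - q}"
      proof
        fix x assume "x \<in> {m \<in> {..e}. q \<le> m}"
        then have "x = q + (x - q)" "x - q \<in> {..e-q}" by auto
        then show "x \<in> (+) q ` {..e - q}" by blast
      qed
    qed
    finally show ?thesis .
  qed
  have "(\<Sum>q\<in>{1..e}. \<Sum>m\<le>e-q. F q (q + m)) = (\<Sum>q\<in>{1..e}. \<Sum>m\<in>{m. m \<in> {..e} \<and> q \<le> m}. F q m)"
    by (rule sum.cong[OF refl]) (simp add: inner)
  also have "\<dots> = (\<Sum>m\<in>{..e}. \<Sum>q\<in>{q. q \<in> {1..e} \<and> q \<le> m}. F q m)"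
    by (rule sum.swap_restrict) auto
  also have "\<dots> = (\<Sum>m\<le>e. \<Sum>q\<in>{1..m}. F q m)"
    by (rule sum.cong[OF refl], rule sum.cong) auto
  finally show ?thesis .
qed

lemma sum_choose_Suc_split:
  fixes X :: "nat \<Rightarrow> 'a::comm_semiring_1"
  shows "(\<Sum>k\<le>Suc l. of_nat (Suc l choose k) * X k)
    = (\<Sum>k\<le>l. of_nat (l choose k) * X k) + (\<Sum>k\<le>l. of_nat (l choose k) * X (Suc k))"
proof -
  have "(\<Sum>k\<le>Suc l. of_nat (Suc l choose k) * X k)
      = X 0 + (\<Sum>k\<le>l. of_nat (l choose Suc k) * X (Suc k)) + (\<Sum>k\<le>l. of_nat (l choose k) * X (Suc k))"
    by (subst sum.atMost_Suc_shift) (simp add: sum.distrib algebra_simps)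
  also have "X 0 + (\<Sum>k\<le>l. of_nat (l choose Suc k) * X (Suc k)) = (\<Sum>k\<le>Suc l. of_nat (l choose k) * X k)"
    by (subst sum.atMost_Suc_shift) simp
  also have "\<dots> = (\<Sum>k\<le>l. of_nat (l choose k) * X k)"
    by (simp add: binomial_eq_0)
  finally show ?thesis .
qed

lemma sum_binomial_exp_product:
  fixes g G :: "nat \<Rightarrow> nat \<Rightarrow> complex"
  assumes g0: "\<And>k m. m < k \<Longrightarrow> g k m = 0" and G0: "\<And>l m. m \<le> e \<Longrightarrow> e - m < l \<Longrightarrow> G l m = 0"
  shows "(\<Sum>l\<le>e. (\<Sum>k\<le>l. of_nat (l choose k) * (\<Sum>m\<le>e. g k m * G (l - k) m)) / fact l)
     = (\<Sum>m\<le>e. (\<Sum>k\<le>m. g k m / fact k) * (\<Sum>l\<le>e-m. G l m / fact l))"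
proof -
  define H where "H k l m = g k m / fact k * (G l m / fact l)" for k l m
  define D where "D = {(i::nat, j::nat). i + j \<le> e}"
  have finD: "finite D"
  proof -
    have "D \<subseteq> {..e} \<times> {..e}" unfolding D_def by auto
    then show ?thesis by (rule finite_subset) auto
  qed
  have "(\<Sum>l\<le>e. (\<Sum>k\<le>l. of_nat (l choose k) * (\<Sum>m\<le>e. g k m * G (l - k) m)) / fact l)
      = (\<Sum>l\<le>e. \<Sum>k\<le>l. \<Sum>m\<le>e. H k (l - k) m)"
  proof (rule sum.cong[OF refl])
    fix l
    have "(\<Sum>k\<le>l. of_nat (l choose k) * (\<Sum>m\<le>e. g k m * G (l - k) m)) / fact l
        = (\<Sum>k\<le>l. (of_nat (l choose k) / fact l) * (\<Sum>m\<le>e. g k m * G (l - k) m))"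
      by (simp add: sum_divide_distrib)
    also have "\<dots> = (\<Sum>k\<le>l. \<Sum>m\<le>e. H k (l - k) m)"
    proof (rule sum.cong[OF refl])
      fix k assume "k \<in> {..l}"
      then have "(of_nat (l choose k) :: complex) / fact l = 1 / (fact k * fact (l - k))"
        by (simp add: binomial_fact)
      then show "(of_nat (l choose k) / fact l) * (\<Sum>m\<le>e. g k m * G (l - k) m) = (\<Sum>m\<le>e. H k (l - k) m)"
        unfolding H_def by (simp add: sum_distrib_left)
    qed
    finally show "(\<Sum>k\<le>l. of_nat (l choose k) * (\<Sum>m\<le>e. g k m * G (l - k) m)) / fact l
        = (\<Sum>k\<le>l. \<Sum>m\<le>e. H k (l - k) m)" .
  qed
  also have "\<dots> = (\<Sum>(k, l)\<in>D. \<Sum>m\<le>e. H k l m)"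
    unfolding D_def by (rule sum.triangle_reindex_eq[symmetric])
  also have "\<dots> = (\<Sum>m\<le>e. \<Sum>(k, l)\<in>D. H k l m)"
    by (simp add: case_prod_unfold, rule sum.swap)
  also have "\<dots> = (\<Sum>m\<le>e. (\<Sum>k\<le>m. g k m / fact k) * (\<Sum>l\<le>e-m. G l m / fact l))"
  proof (rule sum.cong[OF refl])
    fix m assume m: "m \<in> {..e}"
    have sub: "{..m} \<times> {..e-m} \<subseteq> D" using m unfolding D_def by auto
    have "(\<Sum>(k, l)\<in>D. H k l m) = (\<Sum>(k, l)\<in>{..m} \<times> {..e-m}. H k l m)"
    proof (rule sum.mono_neutral_right[OF finD sub])
      show "\<forall>i\<in>D - {..m} \<times> {..e - m}. (case i of (k, l) \<Rightarrow> H k l m) = 0"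
      proof
        fix i assume i: "i \<in> D - {..m} \<times> {..e - m}"
        obtain k l where kl: "i = (k, l)" by (cases i)
        have "m < k \<or> e - m < l" using i kl by auto
        then have "H k l m = 0" using m g0 G0 unfolding H_def by auto
        then show "(case i of (k, l) \<Rightarrow> H k l m) = 0" using kl by simp
      qed
    qed
    also have "\<dots> = (\<Sum>k\<le>m. \<Sum>l\<le>e-m. H k l m)"
      by (rule sum.cartesian_product[symmetric])
    also have "\<dots> = (\<Sum>k\<le>m. g k m / fact k) * (\<Sum>l\<le>e-m. G l m / fact l)"
      unfolding H_def by (simp add: sum_product)
    finally show "(\<Sum>(k, l)\<in>D. H k l m) = (\<Sum>k\<le>m. g k m / fact k) * (\<Sum>l\<le>e-m. G l m / fact l)" .
  qed
  finally show ?thesis .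
qed

lemma prod_three_valued:
  fixes t :: complex
  shows "finite I \<Longrightarrow> (\<Prod>i\<in>I. if P i then 1 else if Q i then t else 1 + t)
    = t ^ card {i\<in>I. \<not> P i \<and> Q i} * (1 + t) ^ card {i\<in>I. \<not> P i \<and> \<not> Q i}"
proof (induction I rule: finite_induct)
  case empty then show ?case by simp
next
  case (insert x F)
  show ?case
  proof (cases "P x")
    case True
    then have a: "{i\<in>insert x F. \<not> P i \<and> Q i} = {i\<in>F. \<not> P i \<and> Q i}"
      and b: "{i\<in>insert x F. \<not> P i \<and> \<not> Q i} = {i\<in>F. \<not> P i \<and> \<not> Q i}" by auto
    show ?thesis unfolding a b prod.insert[OF insert(1,2)] using True insert(3) by simp
  next
    case nP: False
    show ?thesis
    proof (cases "Q x")
      case True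
      then have a: "{i\<in>insert x F. \<not> P i \<and> Q i} = insert x {i\<in>F. \<not> P i \<and> Q i}"
        and b: "{i\<in>insert x F. \<not> P i \<and> \<not> Q i} = {i\<in>F. \<not> P i \<and> \<not> Q i}" using nP by auto
      have c: "card (insert x {i\<in>F. \<not> P i \<and> Q i}) = Suc (card {i\<in>F. \<not> P i \<and> Q i})"
        using insert(1,2) by simp
      show ?thesis unfolding a b c prod.insert[OF insert(1,2)] using True nP insert(3) by simp
    next
      case False
      then have a: "{i\<in>insert x F. \<not> P i \<and> Q i} = {i\<in>F. \<not> P i \<and> Q i}"
        and b: "{i\<in>insert x F. \<not> P i \<and> \<not> Q i} = insert x {i\<in>F. \<not> P i \<and> \<not> Q i}" using nP by auto
      have c: "card (insert x {i\<in>F. \<not> P i \<and> \<not> Q i}) = Suc (card {i\<in>F. \<not> P i \<and> \<not> Q i})"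
        using insert(1,2) by simp
      show ?thesis unfolding a b c prod.insert[OF insert(1,2)] using False nP insert(3) by (simp add: algebra_simps)
    qed
  qed
qed

definition remove_nth :: "nat \<Rightarrow> 'a list \<Rightarrow> 'a list" where
  "remove_nth i ys = take i ys @ drop (Suc i) ys"

lemma remove_nth_0[simp]: "remove_nth 0 (y # ys) = ys" by (simp add: remove_nth_def)

lemma remove_nth_1[simp]: "remove_nth (Suc 0) (y0 # y1 # ys) = y0 # ys" by (simp add: remove_nth_def)

lemma remove_nth_Suc_Suc[simp]: "remove_nth (Suc (Suc i)) (y0 # y1 # ys) = y0 # y1 # remove_nth i ys" by (simp add: remove_nth_def)

lemma length_remove_nth: "i < length ys \<Longrightarrow> length (remove_nth i ys) = length ys - 1"
  by (simp add: remove_nth_def)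

lemma sum_list_remove_nth: "i < length ys \<Longrightarrow> sum_list (remove_nth i ys) = sum_list ys - ys ! i"
  for ys :: "'a::ab_group_add list"
proof -
  assume i: "i < length ys"
  have "ys = take i ys @ ys ! i # drop (Suc i) ys" using i by (simp add: id_take_nth_drop)
  then have "sum_list ys = sum_list (take i ys) + ys ! i + sum_list (drop (Suc i) ys)"
    by (metis add.assoc sum_list.Cons sum_list_append)
  then show ?thesis by (simp add: remove_nth_def)
qed

lemma sorted_wrt_remove_nth: "sorted_wrt P ys \<Longrightarrow> sorted_wrt P (remove_nth i ys)"
proof -
  assume s: "sorted_wrt P ys"
  have "sorted_wrt P (take i ys @ drop (Suc i) ys)"
    unfolding sorted_wrt_append
  proof (intro conjI)
    show "sorted_wrt P (take i ys)" using s by (rule sorted_wrt_take)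
    show "sorted_wrt P (drop (Suc i) ys)" using s by (rule sorted_wrt_drop)
    show "\<forall>x\<in>set (take i ys). \<forall>y\<in>set (drop (Suc i) ys). P x y"
    proof (intro ballI)
      fix x y assume x: "x \<in> set (take i ys)" and y: "y \<in> set (drop (Suc i) ys)"
      have "ys = take i ys @ drop i ys" by simp
      moreover have "set (drop (Suc i) ys) \<subseteq> set (drop i ys)" by (simp add: set_drop_subset_set_drop)
      ultimately show "P x y" using s x y sorted_wrt_append[of P "take i ys" "drop i ys"] by auto
    qed
  qed
  then show ?thesis by (simp add: remove_nth_def)
qed

lemma set_remove_nth: "distinct ys \<Longrightarrow> i < length ys \<Longrightarrow> set (remove_nth i ys) = set ys - {ys ! i}"
proof -
  assume d: "distinct ys" and i: "i < length ys"
  have ys: "ys = take i ys @ ys ! i # drop (Suc i) ys" using i by (simp add: id_take_nth_drop)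
  have "distinct (take i ys @ ys ! i # drop (Suc i) ys)" using d ys by metis
  then have "ys ! i \<notin> set (take i ys)" "ys ! i \<notin> set (drop (Suc i) ys)" by auto
  moreover have "set ys = set (take i ys) \<union> {ys ! i} \<union> set (drop (Suc i) ys)"
    by (subst ys) auto
  ultimately show ?thesis unfolding remove_nth_def by auto
qed

lemma sorted_gt_distinct: "sorted_wrt (>) (ys :: 'a::linorder list) \<Longrightarrow> distinct ys"
  by (induction ys) auto

lemma sorted_gt_set_unique:
  fixes xs ys :: "'a::linorder list"
  assumes "sorted_wrt (>) xs" "sorted_wrt (>) ys" "set xs = set ys"
  shows "xs = ys"
proof -
  have "sorted_wrt (<) (rev xs)" "sorted_wrt (<) (rev ys)" using assms(1,2) by (simp_all add: sorted_wrt_rev)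
  then have "rev ys = rev xs" using strict_sorted_equal assms(3) by (metis set_rev)
  then show ?thesis by simp
qed

lemma sorted_gt_nth_le_hd:
  fixes xs :: "'a::linorder list"
  assumes "sorted_wrt (>) xs" and "i < length xs"
  shows "xs ! i \<le> xs ! 0"
  using assms sorted_wrt_nth_less[OF assms(1), of 0 i] by (cases i) auto

lemma sorted_gt_map_int: "sorted_wrt (>) lam \<Longrightarrow> sorted_wrt (>) (map int lam)"
  by (simp add: sorted_wrt_map)

lemma card_above_nth:
  assumes s: "sorted_wrt (>) (ys :: 'a::linorder list)" and i: "i < length ys"
  shows "card {j \<in> set ys. ys ! i < j} = i"
proof -
  have "{j \<in> set ys. ys ! i < j} = set (take i ys)"
  proof
    show "{j \<in> set ys. ys ! i < j} \<subseteq> set (take i ys)"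
    proof
      fix j assume "j \<in> {j \<in> set ys. ys ! i < j}"
      then obtain k where k: "k < length ys" "ys ! k = j" "ys ! i < j" by (auto simp: in_set_conv_nth)
      have "k < i"
      proof (rule ccontr)
        assume "\<not> k < i"
        then have "k = i \<or> i < k" by auto
        then show False using k s i sorted_wrt_nth_less[OF s, of i k] by auto
      qed
      then show "j \<in> set (take i ys)" using k by (auto simp: in_set_conv_nth)
    qed
    show "set (take i ys) \<subseteq> {j \<in> set ys. ys ! i < j}"
    proof
      fix j assume "j \<in> set (take i ys)"
      then obtain k where k: "k < i" "ys ! k = j" using i by (auto simp: in_set_conv_nth)
      have "k < length ys" using k i by simp
      then have "j \<in> set ys" using k by auto
      then show "j \<in> {j \<in> set ys. ys ! i < j}" using sorted_wrt_nth_less[OF s k(1) i] k by auto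
    qed
  qed
  moreover have "card (set (take i ys)) = i"
    using sorted_gt_distinct[OF s] i by (simp add: distinct_card)
  ultimately show ?thesis by simp
qed

lemma sum_shift_to_list_index:
  assumes d: "distinct ys"
  shows "(\<Sum>m\<le>D. (if x + int m \<in> set ys then g m (x + int m) else 0))
    = (\<Sum>i<length ys. if 0 \<le> ys ! i - x \<and> ys ! i - x \<le> int D then g (nat (ys ! i - x)) (ys ! i) else 0)"
proof -
  have A: "(if x + int m \<in> set ys then g m (x + int m) else 0)
      = (\<Sum>i<length ys. if ys ! i = x + int m then g m (ys ! i) else 0)" for m
  proof (cases "x + int m \<in> set ys")
    case True
    then obtain j where j: "j < length ys" "ys ! j = x + int m" by (auto simp: in_set_conv_nth)
    have "(\<Sum>i<length ys. if ys ! i = x + int m then g m (ys ! i) else 0)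
        = (\<Sum>i<length ys. if i = j then g m (ys ! i) else 0)"
    proof (rule sum.cong[OF refl])
      fix i assume i: "i \<in> {..<length ys}"
      have "ys ! i = x + int m \<longleftrightarrow> i = j" using j i d nth_eq_iff_index_eq[OF d, of i j] by auto
      then show "(if ys ! i = x + int m then g m (ys ! i) else 0) = (if i = j then g m (ys ! i) else 0)" by simp
    qed
    also have "\<dots> = g m (x + int m)" using j by simp
    finally show ?thesis using True by simp
  next
    case False
    then have "\<forall>i<length ys. ys ! i \<noteq> x + int m" by (metis nth_mem)
    then show ?thesis using False by simp
  qed
  have "(\<Sum>m\<le>D. (if x + int m \<in> set ys then g m (x + int m) else 0))
      = (\<Sum>m\<le>D. \<Sum>i<length ys. if ys ! i = x + int m then g m (ys ! i) else 0)"
    by (simp only: A)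
  also have "\<dots> = (\<Sum>i<length ys. \<Sum>m\<le>D. if ys ! i = x + int m then g m (ys ! i) else 0)"
    by (rule sum.swap)
  also have "\<dots> = (\<Sum>i<length ys. if 0 \<le> ys ! i - x \<and> ys ! i - x \<le> int D then g (nat (ys ! i - x)) (ys ! i) else 0)"
  proof (rule sum.cong[OF refl])
    fix i
    have "(\<Sum>m\<le>D. if ys ! i = x + int m then g m (ys ! i) else 0)
        = (\<Sum>m\<le>D. if m = nat (ys ! i - x) \<and> 0 \<le> ys ! i - x then g (nat (ys ! i - x)) (ys ! i) else 0)"
      by (rule sum.cong[OF refl]) auto
    also have "\<dots> = (if 0 \<le> ys ! i - x \<and> ys ! i - x \<le> int D then g (nat (ys ! i - x)) (ys ! i) else 0)"
      by (cases "0 \<le> ys ! i - x") (auto simp: sum.delta')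
    finally show "(\<Sum>m\<le>D. if ys ! i = x + int m then g m (ys ! i) else 0) = \<dots>" .
  qed
  finally show ?thesis .
qed

section \<open>Maya sets and wedge signs\<close>

definition maya :: "int set \<Rightarrow> bool" where
  "maya S \<longleftrightarrow> (\<exists>a. \<forall>j. j \<le> a \<longrightarrow> j \<in> S) \<and> (\<exists>b. \<forall>j\<in>S. j \<le> b)"

lemma maya_insert[simp]: "maya (insert x S) = maya S"
proof
  assume "maya (insert x S)"
  then obtain a b where a: "\<forall>j. j \<le> a \<longrightarrow> j \<in> insert x S" and b: "\<forall>j\<in>insert x S. j \<le> b"
    unfolding maya_def by blast
  have "\<forall>j. j \<le> min a (x - 1) \<longrightarrow> j \<in> S" using a by force
  moreover have "\<forall>j\<in>S. j \<le> b" using b by blast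
  ultimately show "maya S" unfolding maya_def by blast
next
  assume "maya S"
  then obtain a b where a: "\<forall>j. j \<le> a \<longrightarrow> j \<in> S" and b: "\<forall>j\<in>S. j \<le> b"
    unfolding maya_def by blast
  have "\<forall>j\<in>insert x S. j \<le> max b x" using b by force
  moreover have "\<forall>j. j \<le> a \<longrightarrow> j \<in> insert x S" using a by blast
  ultimately show "maya (insert x S)" unfolding maya_def by blast
qed

lemma maya_remove[simp]: "maya (S - {x}) = maya S"
proof -
  have "maya (insert x (S - {x})) = maya (S - {x})" by (rule maya_insert)
  moreover have "maya (insert x (S - {x})) = maya S"
    by (cases "x \<in> S") (auto simp: insert_absorb)
  ultimately show ?thesis by simp
qed

lemma finite_maya_above: "maya S \<Longrightarrow> finite {j\<in>S. a < j}"
proof -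
  assume "maya S"
  then obtain b where b: "\<forall>j\<in>S. j \<le> b" unfolding maya_def by blast
  have "{j\<in>S. a < j} \<subseteq> {a<..b}" using b by auto
  then show ?thesis by (rule finite_subset) simp
qed

lemma maya_atMost_Un: "finite X \<Longrightarrow> maya ({..f} \<union> X)"
  unfolding maya_def atMost_def
proof (intro conjI exI)
  assume X: "finite X"
  show "\<forall>j\<le>f. j \<in> {j. j \<le> f} \<union> X" by auto
  show "\<forall>j\<in>{j. j \<le> f} \<union> X. j \<le> max f (Max (insert f X))"
  proof
    fix j assume j: "j \<in> {j. j \<le> f} \<union> X"
    show "j \<le> max f (Max (insert f X))"
    proof (cases "j \<in> X")
      case True then show ?thesis using X by (simp add: le_max_iff_disj)
    next
      case False then show ?thesis using j by auto
    qed
  qed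
qed

lemma wsign_sq[simp]: "wsign S a * wsign S a = 1"
  unfolding wsign_def by (simp add: power_mult_distrib[symmetric] flip: power_add)

lemma wsign_eq_1_if_none_above: "\<forall>j\<in>S. j \<le> a \<Longrightarrow> wsign S a = 1"
proof -
  assume "\<forall>j\<in>S. j \<le> a"
  then have none: "{j \<in> S. a < j} = {}" by auto
  show ?thesis by (simp only: wsign_def none) simp
qed

lemma wsign_insert:
  assumes "maya S"
  shows "wsign (insert x S) a = (if x \<notin> S \<and> a < x then - wsign S a else wsign S a)"
proof -
  have fin: "finite {j\<in>S. a < j}" using finite_maya_above[OF assms] .
  show ?thesis
  proof (cases "x \<notin> S \<and> a < x")
    case True
    then have "{j\<in>insert x S. a < j} = insert x {j\<in>S. a < j}" by auto
    then show ?thesis using True fin unfolding wsign_def by simp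
  next
    case False
    then have "{j\<in>insert x S. a < j} = {j\<in>S. a < j}" by auto
    then show ?thesis using False unfolding wsign_def by simp
  qed
qed

lemma wsign_remove:
  assumes "maya S"
  shows "wsign (S - {x}) a = (if x \<in> S \<and> a < x then - wsign S a else wsign S a)"
proof -
  have m: "maya (S - {x})" using assms by simp
  show ?thesis
  proof (cases "x \<in> S")
    case True
    then have "S = insert x (S - {x})" by auto
    then have "wsign S a = (if a < x then - wsign (S - {x}) a else wsign (S - {x}) a)"
      using wsign_insert[OF m, of x a] by simp
    then show ?thesis using True by (auto simp: wsign_def)
  next
    case False then show ?thesis by simp
  qed
qed

lemma wsign_atMost_Un_nth:
  assumes s: "sorted_wrt (>) ys" and i: "i < length ys" and f: "\<forall>a\<in>set ys. f < a"
  shows "wsign ({..f} \<union> set ys - {ys ! i}) (ys ! i) = (-1) ^ i"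
proof -
  have yi: "ys ! i \<in> set ys" using i by simp
  have "{j \<in> {..f} \<union> set ys - {ys ! i}. ys ! i < j} = {j \<in> set ys. ys ! i < j}"
    using f yi unfolding atMost_def by force
  then show ?thesis unfolding wsign_def using card_above_nth[OF s i] by simp
qed

lemma atMost_Un_remove_nth:
  fixes ys :: "'a::linorder list"
  assumes s: "sorted_wrt (>) ys" and i: "i < length ys" and f: "\<forall>a\<in>set ys. f < a"
  shows "{..f} \<union> set (remove_nth i ys) = {..f} \<union> set ys - {ys ! i}"
proof -
  have "f < ys ! i" using f i by simp
  then have "ys ! i \<notin> {..f}" by simp
  then show ?thesis using set_remove_nth[OF sorted_gt_distinct[OF s] i] by auto
qed

definition maya_supp :: "fvec \<Rightarrow> bool" where
  "maya_supp v \<longleftrightarrow> (\<forall>T. v T \<noteq> 0 \<longrightarrow> maya T)"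

lemma maya_supp_zero: "\<lbrakk>maya_supp v; \<not> maya T\<rbrakk> \<Longrightarrow> v T = 0"
  unfolding maya_supp_def by blast

lemma maya_supp_psi: "maya_supp v \<Longrightarrow> maya_supp (psi a v)"
  unfolding maya_supp_def psi_def by auto

lemma maya_supp_psistar: "maya_supp v \<Longrightarrow> maya_supp (psistar a v)"
  unfolding maya_supp_def psistar_def by (auto split: if_splits)

lemma maya_supp_sum: "(\<And>x. x \<in> X \<Longrightarrow> maya_supp (f x)) \<Longrightarrow> maya_supp (\<lambda>T. \<Sum>x\<in>X. f x T)"
  unfolding maya_supp_def by (metis (mono_tags, lifting) sum.neutral)

lemma maya_supp_scale: "maya_supp f \<Longrightarrow> maya_supp (\<lambda>T. c * f T)"
  unfolding maya_supp_def by auto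

lemma maya_supp_zero_vec: "maya_supp (\<lambda>T. 0)"
  unfolding maya_supp_def by auto

text \<open>Additivity is only asked for vectors supported on Maya sets: for the others the
  family summed by \<open>fsum\<close> in \<open>Jop\<close> need not be finitely supported.\<close>
definition fock_linear :: "(fvec \<Rightarrow> fvec) \<Rightarrow> bool" where
  "fock_linear B \<longleftrightarrow> (\<forall>v. maya_supp v \<longrightarrow> maya_supp (B v))
     \<and> (\<forall>c f T. B (\<lambda>T. c * f T) T = c * B f T)
     \<and> (\<forall>f g T. maya_supp f \<longrightarrow> maya_supp g \<longrightarrow> B (\<lambda>T. f T + g T) T = B f T + B g T)"

lemma fock_linear_maya_supp: "fock_linear B \<Longrightarrow> maya_supp v \<Longrightarrow> maya_supp (B v)"
  unfolding fock_linear_def by blast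

lemma fock_linear_scale: "fock_linear B \<Longrightarrow> B (\<lambda>T. c * f T) T = c * B f T"
  unfolding fock_linear_def by blast

lemma fock_linear_add: "fock_linear B \<Longrightarrow> maya_supp f \<Longrightarrow> maya_supp g \<Longrightarrow> B (\<lambda>T. f T + g T) T = B f T + B g T"
  unfolding fock_linear_def by blast

lemma fock_linear_zero: "fock_linear B \<Longrightarrow> B (\<lambda>T. 0) T = 0"
  using fock_linear_scale[of B 0 "\<lambda>T. 0" T] by simp

lemma fock_linear_sum: "finite X \<Longrightarrow> fock_linear B \<Longrightarrow> (\<And>x. x \<in> X \<Longrightarrow> maya_supp (f x)) \<Longrightarrow>
    B (\<lambda>T. \<Sum>x\<in>X. f x T) T = (\<Sum>x\<in>X. B (f x) T)"
proof (induction X rule: finite_induct)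
  case empty then show ?case by (simp add: fock_linear_zero)
next
  case (insert x F)
  have "B (\<lambda>T. \<Sum>x\<in>insert x F. f x T) T = B (\<lambda>T. f x T + (\<Sum>x\<in>F. f x T)) T"
    using insert(1,2) by simp
  also have "\<dots> = B (f x) T + B (\<lambda>T. \<Sum>x\<in>F. f x T) T"
    using fock_linear_add[OF insert(4), of "f x" "\<lambda>T. \<Sum>x\<in>F. f x T" T] insert(5) maya_supp_sum[of F f]
    by simp
  finally show ?case using insert by simp
qed

lemma fock_linear_sum_scale: "fock_linear B \<Longrightarrow> finite X \<Longrightarrow> (\<And>x. x \<in> X \<Longrightarrow> maya_supp (f x)) \<Longrightarrow>
    B (\<lambda>T. \<Sum>x\<in>X. g x * f x T) T = (\<Sum>x\<in>X. g x * B (f x) T)"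
proof -
  assume B: "fock_linear B" and X: "finite X" and f: "\<And>x. x \<in> X \<Longrightarrow> maya_supp (f x)"
  have "B (\<lambda>T. \<Sum>x\<in>X. g x * f x T) T = (\<Sum>x\<in>X. B (\<lambda>T. g x * f x T) T)"
    by (rule fock_linear_sum[OF X B, of "\<lambda>x T. g x * f x T"]) (rule maya_supp_scale[OF f])
  also have "\<dots> = (\<Sum>x\<in>X. g x * B (f x) T)" using fock_linear_scale[OF B] by simp
  finally show ?thesis .
qed

lemma fock_linear_psi: "fock_linear (psi j)"
  unfolding fock_linear_def using maya_supp_psi by (auto simp: psi_def distrib_left)

lemma fock_linear_psistar: "fock_linear (psistar j)"
  unfolding fock_linear_def using maya_supp_psistar by (auto simp: psistar_def distrib_left)

definition basis_vec :: "int set \<Rightarrow> fvec" where "basis_vec S = (\<lambda>T. if T = S then 1 else 0)"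

lemma maya_supp_basis_vec: "maya S \<Longrightarrow> maya_supp (basis_vec S)"
  unfolding maya_supp_def basis_vec_def by auto

lemma psi_basis_vec: "psi p (basis_vec S) = (\<lambda>U. (if p \<in> S then wsign (S - {p}) p else 0) * basis_vec (S - {p}) U)"
  unfolding psi_def basis_vec_def by (rule ext) auto

lemma psistar_basis_vec: "x \<notin> S' \<Longrightarrow> wsign S' x = 1 \<Longrightarrow> psistar x (basis_vec S') = basis_vec (insert x S')"
  unfolding psistar_def basis_vec_def by (rule ext) auto

lemma ket_eq_basis_vec: "sorted_wrt (>) lam \<Longrightarrow> \<forall>a\<in>set lam. 1 \<le> a \<Longrightarrow> ket lam = basis_vec ({..0} \<union> int ` set lam)"
proof (induction lam)
  case Nil
  show ?case unfolding ket_def vac_def basis_vec_def vac_set_def atMost_def by simp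
next
  case (Cons a lam)
  define S' where "S' = {..0} \<union> int ` set lam"
  have IH: "ket lam = basis_vec S'" unfolding S'_def using Cons by simp
  have aS: "int a \<notin> S'" using Cons.prems unfolding S'_def atMost_def by auto
  have w: "wsign S' (int a) = 1"
    using Cons.prems unfolding S'_def by (intro wsign_eq_1_if_none_above) auto
  have "ket (a # lam) = psistar (int a) (ket lam)" unfolding ket_def by simp
  also have "\<dots> = basis_vec (insert (int a) S')" unfolding IH by (rule psistar_basis_vec[OF aS w])
  finally show ?case unfolding S'_def by simp
qed

lemma bra_eq_coeff: "sorted_wrt (>) mu \<Longrightarrow> \<forall>a\<in>set mu. 1 \<le> a \<Longrightarrow> bra mu v = v ({..0} \<union> int ` set mu)"
proof (induction mu arbitrary: v)
  case Nil
  show ?case unfolding bra_def vac_set_def atMost_def by simp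
next
  case (Cons m mu)
  define S' where "S' = {..0} \<union> int ` set mu"
  have IH: "bra mu w = w S'" for w unfolding S'_def using Cons by simp
  have aS: "int m \<notin> S'" using Cons.prems unfolding S'_def atMost_def by auto
  have w: "wsign S' (int m) = 1"
    using Cons.prems unfolding S'_def by (intro wsign_eq_1_if_none_above) auto
  have "bra (m # mu) v = bra mu (psi (int m) v)" unfolding bra_def by simp
  also have "\<dots> = v (insert (int m) S')" unfolding IH psi_def using aS w by simp
  finally show ?case unfolding S'_def by simp
qed

section \<open>The currents and their commutators with the fermions\<close>

definition hop_sites :: "int \<Rightarrow> int set \<Rightarrow> int set" where
  "hop_sites m T = {i. i \<notin> T \<and> i - m \<in> T}"

lemma finite_hop_sites: "maya T \<Longrightarrow> finite (hop_sites m T)"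
proof -
  assume "maya T"
  then obtain a b where a: "\<forall>j. j \<le> a \<longrightarrow> j \<in> T" and b: "\<forall>j\<in>T. j \<le> b"
    unfolding maya_def by blast
  have "hop_sites m T \<subseteq> {a<..b + \<bar>m\<bar>}"
  proof
    fix i assume "i \<in> hop_sites m T"
    then have "i \<notin> T" "i - m \<in> T" by (auto simp: hop_sites_def)
    have "a < i" using a \<open>i \<notin> T\<close> by (meson not_le)
    have "i - m \<le> b" using b \<open>i - m \<in> T\<close> by blast
    then show "i \<in> {a<..b + \<bar>m\<bar>}" using \<open>a < i\<close> by auto
  qed
  then show ?thesis by (rule finite_subset) simp
qed

definition hop_sign :: "int set \<Rightarrow> int \<Rightarrow> int \<Rightarrow> complex" where
  "hop_sign T m i = wsign (T - {i - m}) (i - m) * wsign (T - {i - m}) i"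

lemma Jop_eq_sum_hops:
  assumes "maya T" "m \<noteq> 0"
  shows "Jop m v T = (\<Sum>i\<in>hop_sites m T. hop_sign T m i * v (insert i (T - {i - m})))"
proof -
  let ?f = "\<lambda>i. psistar (i - m) (psi i v) T"
  have f: "?f i = (if i \<in> hop_sites m T then hop_sign T m i * v (insert i (T - {i - m})) else 0)" for i
    using assms(2) unfolding psistar_def psi_def hop_sites_def hop_sign_def by auto
  have "Jop m v T = sum ?f {i. ?f i \<noteq> 0}" unfolding Jop_def fsum_def by simp
  also have "\<dots> = sum ?f (hop_sites m T)"
    apply (rule sum.mono_neutral_left)
    using finite_hop_sites[OF assms(1)] f by auto
  also have "\<dots> = (\<Sum>i\<in>hop_sites m T. hop_sign T m i * v (insert i (T - {i - m})))"
    using f by simp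
  finally show ?thesis .
qed

lemma Jop_non_maya:
  assumes "maya_supp v" "\<not> maya T"
  shows "Jop m v T = 0"
proof -
  have "psistar (i - m) (psi i v) T = 0" for i
    using maya_supp_zero[OF assms(1)] assms(2) unfolding psistar_def psi_def by auto
  then show ?thesis unfolding Jop_def fsum_def by simp
qed

lemma maya_supp_Jop: "maya_supp v \<Longrightarrow> maya_supp (Jop m v)"
  unfolding maya_supp_def using Jop_non_maya maya_supp_def by blast

lemma fsum_scale: "fsum (\<lambda>i. c * g i) = c * fsum g"
proof (cases "c = 0")
  case True then show ?thesis by (simp add: fsum_def)
next
  case False
  then have "{i. c * g i \<noteq> 0} = {i. g i \<noteq> 0}" by auto
  then show ?thesis unfolding fsum_def by (simp add: sum_distrib_left)
qed

lemma fock_linear_Jop: assumes m: "m \<noteq> 0" shows "fock_linear (Jop m)"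
  unfolding fock_linear_def
proof (intro conjI allI impI)
  show "maya_supp v \<Longrightarrow> maya_supp (Jop m v)" for v by (rule maya_supp_Jop)
next
  fix c f T
  have "psistar (i - m) (psi i (\<lambda>T. c * f T)) T = c * psistar (i - m) (psi i f) T" for i
    unfolding psistar_def psi_def by simp
  then show "Jop m (\<lambda>T. c * f T) T = c * Jop m f T"
    unfolding Jop_def by (simp add: fsum_scale)
next
  fix f g T
  assume f: "maya_supp f" and g: "maya_supp g"
  show "Jop m (\<lambda>T. f T + g T) T = Jop m f T + Jop m g T"
  proof (cases "maya T")
    case True
    show ?thesis
      unfolding Jop_eq_sum_hops[OF True m]
      by (simp add: algebra_simps sum.distrib)
  next
    case False
    have "maya_supp (\<lambda>T. f T + g T)" using f g unfolding maya_supp_def by (metis add.right_neutral)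
    then show ?thesis using Jop_non_maya False f g by simp
  qed
qed

lemma hop_sites_insert:
  assumes "j \<notin> T" "m \<noteq> 0"
  shows "hop_sites m (insert j T) = (if j + m \<in> T then hop_sites m T - {j} else insert (j + m) (hop_sites m T - {j}))"
  using assms unfolding hop_sites_def by (auto simp: algebra_simps)

lemma psi_Jop_commute_occupied:
  assumes mT: "maya T" and m: "m \<noteq> 0" and jT: "j \<in> T"
  shows "psi j (Jop m v) T = Jop m (psi j v) T + psi (j + m) v T"
proof -
  let ?g = "\<lambda>i. hop_sign T m i * psi j v (insert i (T - {i - m}))"
  have g0: "?g i = 0" if "i \<in> hop_sites m T" "i \<noteq> j + m" for i
    using that jT unfolding psi_def hop_sites_def by auto
  have "Jop m (psi j v) T = sum ?g (hop_sites m T)" using Jop_eq_sum_hops[OF mT m] .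
  also have "\<dots> = (\<Sum>i\<in>hop_sites m T. if i = j + m then ?g i else 0)"
    by (rule sum.cong) (use g0 in auto)
  also have "\<dots> = (if j + m \<in> hop_sites m T then ?g (j + m) else 0)"
    using finite_hop_sites[OF mT] by (simp add: sum.delta')
  finally have J: "Jop m (psi j v) T = (if j + m \<in> T then 0 else ?g (j + m))"
    using jT m unfolding hop_sites_def by auto
  show ?thesis
  proof (cases "j + m \<in> T")
    case True then show ?thesis using J jT unfolding psi_def by simp
  next
    case False
    have mT': "maya (T - {j})" using mT by simp
    have s1: "wsign (insert (j + m) (T - {j})) j = (if j < j + m then - wsign (T - {j}) j else wsign (T - {j}) j)"
      using wsign_insert[OF mT', of "j + m" j] False by auto
    have s2: "wsign (T - {j}) (j + m) = (if j + m < j then - wsign T (j + m) else wsign T (j + m))"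
      using wsign_remove[OF mT, of j "j + m"] jT by auto
    have ins: "insert j (insert (j + m) (T - {j})) = insert (j + m) T" using jT by auto
    have "?g (j + m) = - wsign T (j + m) * v (insert (j + m) T)"
      using False m unfolding hop_sign_def psi_def
      by (auto simp: s1 s2 ins)
    then show ?thesis using J False jT unfolding psi_def by simp
  qed
qed

lemma psi_Jop_commute_vacant:
  assumes mT: "maya T" and m: "m \<noteq> 0" and jT: "j \<notin> T"
  shows "psi j (Jop m v) T = Jop m (psi j v) T + psi (j + m) v T"
proof -
  let ?h = "\<lambda>i. hop_sign (insert j T) m i * v (insert i (insert j T - {i - m}))"
  let ?g = "\<lambda>i. hop_sign T m i * psi j v (insert i (T - {i - m}))"
  let ?K = "hop_sites m T - {j}"
  have finK: "finite ?K" using finite_hop_sites[OF mT] by simp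
  have jmK: "j + m \<notin> ?K" unfolding hop_sites_def using jT by auto
  have summand: "wsign T j * ?h i = ?g i" if iK: "i \<in> ?K" for i
  proof -
    define p where "p = i - m"
    have pT: "p \<in> T" and iT: "i \<notin> T" and ij: "i \<noteq> j" using iK unfolding hop_sites_def p_def by auto
    have pj: "p \<noteq> j" using pT jT by auto
    have mTp: "maya (T - {p})" using mT by simp
    have e1: "insert j T - {p} = insert j (T - {p})" using pj by auto
    have e2: "insert i (insert j (T - {p})) = insert j (insert i (T - {p}))" by auto
    have jU: "j \<notin> insert i (T - {p})" using ij jT by auto
    have a1: "wsign (insert j (T - {p})) p = (if p < j then - wsign (T - {p}) p else wsign (T - {p}) p)"
      using wsign_insert[OF mTp, of j p] jT by auto
    have a2: "wsign (insert j (T - {p})) i = (if i < j then - wsign (T - {p}) i else wsign (T - {p}) i)"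
      using wsign_insert[OF mTp, of j i] jT by auto
    have a3: "wsign (T - {p}) j = (if j < p then - wsign T j else wsign T j)"
      using wsign_remove[OF mT, of p j] pT by auto
    have a4: "wsign (insert i (T - {p})) j = (if j < i then - wsign (T - {p}) j else wsign (T - {p}) j)"
      using wsign_insert[OF mTp, of i j] iT by auto
    have a3': "wsign T j = (if j < p then - wsign (T - {p}) j else wsign (T - {p}) j)"
      using a3 by (auto split: if_splits)
    show ?thesis
      unfolding hop_sign_def psi_def p_def[symmetric] e1
      using jU pj ij
      by (simp add: a1 a2 a3' a4 e2)
  qed
  have "psi j (Jop m v) T = wsign T j * Jop m v (insert j T)"
    unfolding psi_def using jT by simp
  also have "Jop m v (insert j T) = sum ?h (hop_sites m (insert j T))"
    using Jop_eq_sum_hops[of "insert j T" m v] mT m by simp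
  also have "\<dots> = sum ?h ?K + (if j + m \<in> T then 0 else ?h (j + m))"
    using hop_sites_insert[OF jT m] finK jmK by simp
  finally have lhs_eq: "psi j (Jop m v) T = wsign T j * sum ?h ?K + (if j + m \<in> T then 0 else wsign T j * ?h (j + m))"
    by (simp add: algebra_simps)
  have "Jop m (psi j v) T = sum ?g (hop_sites m T)" using Jop_eq_sum_hops[OF mT m] .
  also have "\<dots> = sum ?g ?K"
    apply (rule sum.mono_neutral_right)
    using finite_hop_sites[OF mT] by (auto simp: psi_def)
  also have "\<dots> = wsign T j * sum ?h ?K"
    by (simp add: sum_distrib_left summand)
  finally have rhs_eq: "Jop m (psi j v) T = wsign T j * sum ?h ?K" .
  have last: "wsign T j * ?h (j + m) = psi (j + m) v T" if "j + m \<notin> T"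
  proof -
    have "insert j T - {j} = T" using jT by auto
    then show ?thesis using that unfolding hop_sign_def psi_def
      by (simp add: mult.assoc[symmetric])
  qed
  show ?thesis using lhs_eq rhs_eq last by (auto simp: psi_def)
qed

lemma psi_Jop_commute:
  assumes v: "maya_supp v" and m: "m \<noteq> 0"
  shows "psi j (Jop m v) T = Jop m (psi j v) T + psi (j + m) v T"
proof (cases "maya T")
  case False
  have "Jop m v (insert j T) = 0" using Jop_non_maya[OF v] False by simp
  moreover have "Jop m (psi j v) T = 0" using Jop_non_maya[OF maya_supp_psi[OF v] False] .
  moreover have "v (insert (j + m) T) = 0" using maya_supp_zero[OF v] False by simp
  ultimately show ?thesis unfolding psi_def by simp
next
  case True
  then show ?thesis
    by (cases "j \<in> T") (simp_all add: psi_Jop_commute_occupied psi_Jop_commute_vacant m)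
qed

lemma hop_sites_remove:
  assumes "j \<in> T" "m \<noteq> 0"
  shows "hop_sites m (T - {j}) = (if j - m \<in> T then insert j (hop_sites m T - {j + m}) else hop_sites m T - {j + m})"
  using assms unfolding hop_sites_def by (auto simp: algebra_simps)

lemma Jop_psistar_commute_vacant:
  assumes mT: "maya T" and m: "m \<noteq> 0" and jT: "j \<notin> T"
  shows "Jop m (psistar j v) T = psistar j (Jop m v) T + psistar (j - m) v T"
proof -
  let ?g = "\<lambda>i. hop_sign T m i * psistar j v (insert i (T - {i - m}))"
  have g0: "?g i = 0" if "i \<in> hop_sites m T" "i \<noteq> j" for i
    using that jT unfolding psistar_def hop_sites_def by auto
  have "Jop m (psistar j v) T = sum ?g (hop_sites m T)" using Jop_eq_sum_hops[OF mT m] .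
  also have "\<dots> = (\<Sum>i\<in>hop_sites m T. if i = j then ?g i else 0)"
    by (rule sum.cong) (use g0 in auto)
  also have "\<dots> = (if j \<in> hop_sites m T then ?g j else 0)"
    using finite_hop_sites[OF mT] by (simp add: sum.delta')
  finally have J: "Jop m (psistar j v) T = (if j - m \<in> T then ?g j else 0)"
    using jT unfolding hop_sites_def by auto
  have "?g j = wsign (T - {j - m}) (j - m) * v (T - {j - m})" if "j - m \<in> T"
  proof -
    have "insert j (T - {j - m}) - {j} = T - {j - m}" using jT by auto
    then show ?thesis unfolding hop_sign_def psistar_def by (simp add: mult.assoc[symmetric])
  qed
  then show ?thesis using J jT unfolding psistar_def by auto
qed

lemma Jop_psistar_commute_occupied:
  assumes mT: "maya T" and m: "m \<noteq> 0" and jT: "j \<in> T"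
  shows "Jop m (psistar j v) T = psistar j (Jop m v) T + psistar (j - m) v T"
proof -
  let ?g = "\<lambda>i. hop_sign T m i * psistar j v (insert i (T - {i - m}))"
  let ?h = "\<lambda>i. hop_sign (T - {j}) m i * v (insert i (T - {j} - {i - m}))"
  let ?K = "hop_sites m T - {j + m}"
  have finK: "finite ?K" using finite_hop_sites[OF mT] by simp
  have jK: "j \<notin> ?K" unfolding hop_sites_def using jT by auto
  have summand: "?g i = wsign (T - {j}) j * ?h i" if iK: "i \<in> ?K" for i
  proof -
    define p where "p = i - m"
    have pT: "p \<in> T" and iT: "i \<notin> T" and ij: "i \<noteq> j" and pj: "p \<noteq> j"
      using iK jT m unfolding hop_sites_def p_def by auto
    define B where "B = T - {p} - {j}"
    have mB: "maya B" using mT unfolding B_def by simp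
    have pB: "p \<notin> B" "j \<notin> B" "i \<notin> B" using iT unfolding B_def by auto
    have e1: "T - {p} = insert j B" using jT pj unfolding B_def by auto
    have e2: "T - {j} = insert p B" using pT pj unfolding B_def by auto
    have e3: "insert p B - {p} = B" using pB by auto
    have e4: "insert i (insert j B) - {j} = insert i B" using pB ij by auto
    have jU: "j \<in> insert i (insert j B)" by simp
    show ?thesis
      unfolding hop_sign_def psistar_def p_def[symmetric] e1 e2 e3 e4
      using jU pj ij pB
      by (simp add: wsign_insert[OF mB] )
  qed
  have "Jop m (psistar j v) T = sum ?g (hop_sites m T)" using Jop_eq_sum_hops[OF mT m] .
  also have "\<dots> = sum ?g ?K"
    apply (rule sum.mono_neutral_right)
    using finite_hop_sites[OF mT] m by (auto simp: psistar_def)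
  also have "\<dots> = wsign (T - {j}) j * sum ?h ?K"
    by (simp add: sum_distrib_left summand)
  finally have lhs_eq: "Jop m (psistar j v) T = wsign (T - {j}) j * sum ?h ?K" .
  have "Jop m v (T - {j}) = sum ?h (hop_sites m (T - {j}))"
    using Jop_eq_sum_hops[of "T - {j}" m v] mT m by simp
  also have "\<dots> = sum ?h ?K + (if j - m \<in> T then ?h j else 0)"
    using hop_sites_remove[OF jT m] finK jK by simp
  finally have rhs_eq: "psistar j (Jop m v) T = wsign (T - {j}) j * sum ?h ?K
      + (if j - m \<in> T then wsign (T - {j}) j * ?h j else 0)"
    using jT unfolding psistar_def by (simp add: algebra_simps)
  have canc: "wsign (T - {j}) j * ?h j + wsign (T - {j - m}) (j - m) * v (T - {j - m}) = 0"
    if qT: "j - m \<in> T"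
  proof -
    define q where "q = j - m"
    have qj: "q \<noteq> j" using m unfolding q_def by simp
    define B where "B = T - {j} - {q}"
    have mB: "maya B" using mT unfolding B_def by simp
    have qB: "q \<notin> B" "j \<notin> B" unfolding B_def by auto
    have e1: "T - {j} = insert q B" using qT qj unfolding B_def q_def by auto
    have e2: "T - {q} = insert j B" using jT qj unfolding B_def by auto
    have e3: "insert q B - {q} = B" using qB by auto
    show ?thesis
      unfolding hop_sign_def q_def[symmetric] e1 e3 e2
      using qj qB by (auto simp add: wsign_insert[OF mB])
  qed
  show ?thesis using lhs_eq rhs_eq canc unfolding psistar_def by (auto simp: algebra_simps)
qed

lemma Jop_psistar_commute:
  assumes v: "maya_supp v" and m: "m \<noteq> 0"
  shows "Jop m (psistar j v) T = psistar j (Jop m v) T + psistar (j - m) v T"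
proof (cases "maya T")
  case False
  have "Jop m v (T - {j}) = 0" using Jop_non_maya[OF v] False by simp
  moreover have "Jop m (psistar j v) T = 0" using Jop_non_maya[OF maya_supp_psistar[OF v] False] .
  moreover have "v (T - {j - m}) = 0" using maya_supp_zero[OF v] False by simp
  ultimately show ?thesis unfolding psistar_def by simp
next
  case True
  then show ?thesis
    by (cases "j \<in> T") (simp_all add: Jop_psistar_commute_occupied Jop_psistar_commute_vacant m)
qed

section \<open>Moving a fermion through an exponential of currents\<close>

text \<open>\<open>exp_term A c l e v\<close> is the coefficient of \<open>y\<^sup>e\<close> in \<open>(\<Sum>\<^sub>q c q y\<^sup>q A q)\<^sup>l v\<close>, and
  \<open>pow_coeff c k m\<close> the coefficient of \<open>y\<^sup>m\<close> in \<open>(\<Sum>\<^sub>q c q y\<^sup>q)\<^sup>k\<close>; \<open>exp_series_coeff\<close> below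
  is then the coefficient of \<open>exp (\<Sum>\<^sub>q c q y\<^sup>q)\<close>.\<close>
primrec exp_term :: "(nat \<Rightarrow> fvec \<Rightarrow> fvec) \<Rightarrow> (nat \<Rightarrow> complex) \<Rightarrow> nat \<Rightarrow> nat \<Rightarrow> fvec \<Rightarrow> fvec" where
  "exp_term A c 0 e v = (if e = 0 then v else (\<lambda>T. 0))"
| "exp_term A c (Suc l) e v = (\<lambda>T. \<Sum>q\<in>{1..e}. c q * A q (exp_term A c l (e - q) v) T)"

primrec pow_coeff :: "(nat \<Rightarrow> complex) \<Rightarrow> nat \<Rightarrow> nat \<Rightarrow> complex" where
  "pow_coeff c 0 m = (if m = 0 then 1 else 0)"
| "pow_coeff c (Suc k) m = (\<Sum>q\<in>{1..m}. c q * pow_coeff c k (m - q))"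

lemma pow_coeff_eq_0: "m < k \<Longrightarrow> pow_coeff c k m = 0"
proof (induction k arbitrary: m)
  case 0 then show ?case by simp
next
  case (Suc k) then show ?case by (auto intro!: sum.neutral)
qed

lemma maya_supp_exp_term:
  assumes A: "\<forall>q>0. fock_linear (A q)" and v: "maya_supp v"
  shows "maya_supp (exp_term A c l e v)"
proof (induction l arbitrary: e)
  case 0 then show ?case using v maya_supp_zero_vec by simp
next
  case (Suc l)
  show ?case unfolding exp_term.simps
    by (rule maya_supp_sum, rule maya_supp_scale, rule fock_linear_maya_supp) (use A Suc in auto)
qed

lemma exp_term_eq_0:
  assumes A: "\<forall>q>0. fock_linear (A q)"
  shows "e < l \<Longrightarrow> exp_term A c l e v = (\<lambda>T. 0)"
proof (induction l arbitrary: e)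
  case 0 then show ?case by simp
next
  case (Suc l)
  have "A q (exp_term A c l (e - q) v) T = 0" if "q \<in> {1..e}" for q T
  proof -
    have "e - q < l" using Suc.prems that by auto
    then show ?thesis using Suc.IH fock_linear_zero A that by auto
  qed
  then show ?case by simp
qed

text \<open>If \<open>\<Phi>\<^sub>j A\<^sub>q = A\<^sub>q \<Phi>\<^sub>j + \<Phi>\<^bsub>j+q\<^esub>\<close>, then moving \<open>\<Phi>\<^sub>j\<close> through \<open>X\<^sup>l\<close>, where
  \<open>X = \<Sum>\<^sub>q c q y\<^sup>q A q\<close>, produces \<open>(l choose k)\<close> terms with \<open>k\<close> commutators; these shift the
  index of \<open>\<Phi>\<close> by their total degree \<open>m\<close>, weighted by \<open>pow_coeff c k m\<close>.\<close>
lemma Phi_exp_term_commute: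
  assumes A: "\<forall>q>0. fock_linear (A q)" and Phi: "\<forall>j. fock_linear (Phi j)"
    and comm: "\<And>q j w T. q > 0 \<Longrightarrow> maya_supp w \<Longrightarrow> Phi j (A q w) T = A q (Phi j w) T + Phi (j + int q) w T"
    and v: "maya_supp v"
  shows "Phi j (exp_term A c l e v) T = (\<Sum>k\<le>l. of_nat (l choose k) *
            (\<Sum>m\<le>e. pow_coeff c k m * exp_term A c (l - k) (e - m) (Phi (j + int m) v) T))"
proof (induction l arbitrary: j e T)
  case 0
  have "(\<Sum>m\<le>e. pow_coeff c 0 m * exp_term A c 0 (e - m) (Phi (j + int m) v) T)
        = (\<Sum>m\<le>e. if m = 0 then exp_term A c 0 (e - m) (Phi (j + int m) v) T else 0)"
    by (rule sum.cong) auto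
  also have "\<dots> = exp_term A c 0 e (Phi j v) T" by (simp add: sum.delta)
  finally show ?case using fock_linear_zero Phi by auto
next
  case (Suc l)
  have mP: "maya_supp (exp_term A c l' e' w)" if "maya_supp w" for l' e' w using maya_supp_exp_term[OF A that] .
  have mPhi: "maya_supp w \<Longrightarrow> maya_supp (Phi j' w)" for j' w using fock_linear_maya_supp Phi by blast
  define X where "X k = (\<Sum>m\<le>e. pow_coeff c k m * exp_term A c (Suc l - k) (e - m) (Phi (j + int m) v) T)" for k
  define C where "C k = (of_nat (l choose k) :: complex)" for k
  have S0: "Phi j (exp_term A c (Suc l) e v) T = (\<Sum>q\<in>{1..e}. c q * Phi j (A q (exp_term A c l (e - q) v)) T)"
    unfolding exp_term.simps
    by (rule fock_linear_sum_scale) (use Phi A fock_linear_maya_supp mP v in auto)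
  also have "\<dots> = (\<Sum>q\<in>{1..e}. c q * A q (Phi j (exp_term A c l (e - q) v)) T)
        + (\<Sum>q\<in>{1..e}. c q * Phi (j + int q) (exp_term A c l (e - q) v) T)"
    by (simp add: comm mP v distrib_left sum.distrib)
  finally have S1: "Phi j (exp_term A c (Suc l) e v) T = \<dots>" .
  have P1: "(\<Sum>q\<in>{1..e}. c q * A q (Phi j (exp_term A c l (e - q) v)) T) = (\<Sum>k\<le>l. C k * X k)"
  proof -
    have "A q (Phi j (exp_term A c l (e - q) v)) T = (\<Sum>k\<le>l. C k *
            (\<Sum>m\<le>e-q. pow_coeff c k m * A q (exp_term A c (l - k) (e - q - m) (Phi (j + int m) v)) T))"
      if q: "q \<in> {1..e}" for q
    proof -
      have Aq: "fock_linear (A q)" using A q by auto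
      have "A q (Phi j (exp_term A c l (e - q) v)) T = A q (\<lambda>T. \<Sum>k\<le>l. C k *
            (\<Sum>m\<le>e-q. pow_coeff c k m * exp_term A c (l - k) (e - q - m) (Phi (j + int m) v) T)) T"
      proof -
        have "Phi j (exp_term A c l (e - q) v) = (\<lambda>T. \<Sum>k\<le>l. C k *
            (\<Sum>m\<le>e-q. pow_coeff c k m * exp_term A c (l - k) (e - q - m) (Phi (j + int m) v) T))"
          unfolding C_def by (rule ext, rule Suc.IH)
        then show ?thesis by simp
      qed
      also have "\<dots> = (\<Sum>k\<le>l. C k * A q (\<lambda>T.
            (\<Sum>m\<le>e-q. pow_coeff c k m * exp_term A c (l - k) (e - q - m) (Phi (j + int m) v) T)) T)"
        by (rule fock_linear_sum_scale[OF Aq]) (auto intro!: maya_supp_sum maya_supp_scale mP mPhi v)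
      also have "\<dots> = (\<Sum>k\<le>l. C k *
            (\<Sum>m\<le>e-q. pow_coeff c k m * A q (exp_term A c (l - k) (e - q - m) (Phi (j + int m) v)) T))"
        by (rule sum.cong[OF refl], subst fock_linear_sum_scale[OF Aq]) (auto intro!: mP mPhi v)
      finally show ?thesis .
    qed
    then have "(\<Sum>q\<in>{1..e}. c q * A q (Phi j (exp_term A c l (e - q) v)) T)
       = (\<Sum>q\<in>{1..e}. \<Sum>k\<le>l. C k * (\<Sum>m\<le>e-q. c q * pow_coeff c k m * A q (exp_term A c (l - k) (e - q - m) (Phi (j + int m) v)) T))"
      by (simp add: sum_distrib_left algebra_simps)
    also have "\<dots> = (\<Sum>k\<le>l. C k * (\<Sum>q\<in>{1..e}. \<Sum>m\<le>e-q. c q * pow_coeff c k m * A q (exp_term A c (l - k) (e - q - m) (Phi (j + int m) v)) T))"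
      by (simp add: sum_distrib_left, rule sum.swap)
    also have "\<dots> = (\<Sum>k\<le>l. C k * (\<Sum>m\<le>e. \<Sum>q\<in>{1..e-m}. c q * pow_coeff c k m * A q (exp_term A c (l - k) (e - m - q) (Phi (j + int m) v)) T))"
      by (subst sum_triangle_swap) (simp add: algebra_simps)
    also have "\<dots> = (\<Sum>k\<le>l. C k * X k)"
      unfolding X_def
    proof (rule sum.cong[OF refl])
      fix k assume k: "k \<in> {..l}"
      then have "Suc l - k = Suc (l - k)" by auto
      then show "C k * (\<Sum>m\<le>e. \<Sum>q\<in>{1..e-m}. c q * pow_coeff c k m * A q (exp_term A c (l - k) (e - m - q) (Phi (j + int m) v)) T)
          = C k * (\<Sum>m\<le>e. pow_coeff c k m * exp_term A c (Suc l - k) (e - m) (Phi (j + int m) v) T)"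
        by (simp add: sum_distrib_left algebra_simps)
    qed
    finally show ?thesis .
  qed
  have P2: "(\<Sum>q\<in>{1..e}. c q * Phi (j + int q) (exp_term A c l (e - q) v) T) = (\<Sum>k\<le>l. C k * X (Suc k))"
  proof -
    have "(\<Sum>q\<in>{1..e}. c q * Phi (j + int q) (exp_term A c l (e - q) v) T)
      = (\<Sum>q\<in>{1..e}. c q * (\<Sum>k\<le>l. C k * (\<Sum>m\<le>e-q. pow_coeff c k m * exp_term A c (l - k) (e - q - m) (Phi (j + int q + int m) v) T)))"
      unfolding C_def by (subst Suc.IH) (rule refl)
    also have "\<dots> = (\<Sum>k\<le>l. C k * (\<Sum>q\<in>{1..e}. \<Sum>m\<le>e-q. c q * pow_coeff c k m * exp_term A c (l - k) (e - q - m) (Phi (j + int q + int m) v) T))"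
      by (simp add: sum_distrib_left algebra_simps, rule sum.swap)
    also have "\<dots> = (\<Sum>k\<le>l. C k * (\<Sum>m\<le>e. \<Sum>q\<in>{1..m}. c q * pow_coeff c k (m - q) * exp_term A c (l - k) (e - m) (Phi (j + int m) v) T))"
    proof (rule sum.cong[OF refl])
      fix k
      let ?F = "\<lambda>q m. c q * pow_coeff c k (m - q) * exp_term A c (l - k) (e - m) (Phi (j + int m) v) T"
      have "(\<Sum>q\<in>{1..e}. \<Sum>m\<le>e-q. c q * pow_coeff c k m * exp_term A c (l - k) (e - q - m) (Phi (j + int q + int m) v) T)
          = (\<Sum>q\<in>{1..e}. \<Sum>m\<le>e-q. ?F q (q + m))"
        by (simp add: algebra_simps)
      also have "\<dots> = (\<Sum>m\<le>e. \<Sum>q\<in>{1..m}. ?F q m)" by (rule sum_triangle_shift_swap)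
      finally show "C k * (\<Sum>q\<in>{1..e}. \<Sum>m\<le>e-q. c q * pow_coeff c k m * exp_term A c (l - k) (e - q - m) (Phi (j + int q + int m) v) T)
          = C k * (\<Sum>m\<le>e. \<Sum>q\<in>{1..m}. ?F q m)" by simp
    qed
    also have "\<dots> = (\<Sum>k\<le>l. C k * X (Suc k))"
      unfolding X_def by (simp add: sum_distrib_right)
    finally show ?thesis .
  qed
  show ?case
    unfolding S1 P1 P2 X_def[symmetric] sum_choose_Suc_split C_def ..
qed

lemma exp_term_Phi_commute:
  assumes A: "\<forall>q>0. fock_linear (A q)" and Phi: "\<forall>j. fock_linear (Phi j)"
    and comm: "\<And>q j w T. q > 0 \<Longrightarrow> maya_supp w \<Longrightarrow> A q (Phi j w) T = Phi j (A q w) T + Phi (j + int q) w T"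
    and v: "maya_supp v"
  shows "exp_term A c l e (Phi j v) T = (\<Sum>k\<le>l. of_nat (l choose k) *
            (\<Sum>m\<le>e. pow_coeff c k m * Phi (j + int m) (exp_term A c (l - k) (e - m) v) T))"
proof (induction l arbitrary: j e T)
  case 0
  have "(\<Sum>m\<le>e. pow_coeff c 0 m * Phi (j + int m) (exp_term A c 0 (e - m) v) T)
        = (\<Sum>m\<le>e. if m = 0 then Phi (j + int m) (exp_term A c 0 (e - m) v) T else 0)"
    by (rule sum.cong) auto
  also have "\<dots> = Phi j (exp_term A c 0 e v) T" by (simp add: sum.delta)
  finally show ?case using fock_linear_zero Phi by auto
next
  case (Suc l)
  have mP: "maya_supp (exp_term A c l' e' w)" if "maya_supp w" for l' e' w using maya_supp_exp_term[OF A that] .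
  have mPhi: "maya_supp w \<Longrightarrow> maya_supp (Phi j' w)" for j' w using fock_linear_maya_supp Phi by blast
  have mAq: "q > 0 \<Longrightarrow> maya_supp w \<Longrightarrow> maya_supp (A q w)" for q w using fock_linear_maya_supp A by blast
  define X where "X k = (\<Sum>m\<le>e. pow_coeff c k m * Phi (j + int m) (exp_term A c (Suc l - k) (e - m) v) T)" for k
  define C where "C k = (of_nat (l choose k) :: complex)" for k
  have S0: "exp_term A c (Suc l) e (Phi j v) T = (\<Sum>q\<in>{1..e}. c q * A q (exp_term A c l (e - q) (Phi j v)) T)"
    by simp
  have inner: "A q (exp_term A c l (e - q) (Phi j v)) T = (\<Sum>k\<le>l. C k *
            (\<Sum>m\<le>e-q. pow_coeff c k m * Phi (j + int m) (A q (exp_term A c (l - k) (e - q - m) v)) T))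
          + (\<Sum>k\<le>l. C k *
            (\<Sum>m\<le>e-q. pow_coeff c k m * Phi (j + int m + int q) (exp_term A c (l - k) (e - q - m) v) T))"
    if q: "q \<in> {1..e}" for q
  proof -
    have Aq: "fock_linear (A q)" using A q by auto
    have "exp_term A c l (e - q) (Phi j v) = (\<lambda>T. \<Sum>k\<le>l. C k *
            (\<Sum>m\<le>e-q. pow_coeff c k m * Phi (j + int m) (exp_term A c (l - k) (e - q - m) v) T))"
      unfolding C_def by (rule ext, rule Suc.IH)
    then have "A q (exp_term A c l (e - q) (Phi j v)) T = A q (\<lambda>T. \<Sum>k\<le>l. C k *
            (\<Sum>m\<le>e-q. pow_coeff c k m * Phi (j + int m) (exp_term A c (l - k) (e - q - m) v) T)) T"
      by simp
    also have "\<dots> = (\<Sum>k\<le>l. C k * A q (\<lambda>T.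
            (\<Sum>m\<le>e-q. pow_coeff c k m * Phi (j + int m) (exp_term A c (l - k) (e - q - m) v) T)) T)"
      by (rule fock_linear_sum_scale[OF Aq]) (auto intro!: maya_supp_sum maya_supp_scale mP mPhi v)
    also have "\<dots> = (\<Sum>k\<le>l. C k *
            (\<Sum>m\<le>e-q. pow_coeff c k m * A q (Phi (j + int m) (exp_term A c (l - k) (e - q - m) v)) T))"
      by (rule sum.cong[OF refl], subst fock_linear_sum_scale[OF Aq]) (auto intro!: mP mPhi v)
    also have "\<dots> = (\<Sum>k\<le>l. C k *
            (\<Sum>m\<le>e-q. pow_coeff c k m * Phi (j + int m) (A q (exp_term A c (l - k) (e - q - m) v)) T))
          + (\<Sum>k\<le>l. C k *
            (\<Sum>m\<le>e-q. pow_coeff c k m * Phi (j + int m + int q) (exp_term A c (l - k) (e - q - m) v) T))"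
      using q by (simp add: comm mP v distrib_left sum.distrib)
    finally show ?thesis .
  qed
  have P1: "(\<Sum>q\<in>{1..e}. c q * (\<Sum>k\<le>l. C k *
            (\<Sum>m\<le>e-q. pow_coeff c k m * Phi (j + int m) (A q (exp_term A c (l - k) (e - q - m) v)) T)))
        = (\<Sum>k\<le>l. C k * X k)"
  proof -
    have "(\<Sum>q\<in>{1..e}. c q * (\<Sum>k\<le>l. C k *
            (\<Sum>m\<le>e-q. pow_coeff c k m * Phi (j + int m) (A q (exp_term A c (l - k) (e - q - m) v)) T)))
       = (\<Sum>k\<le>l. C k * (\<Sum>q\<in>{1..e}. \<Sum>m\<le>e-q. pow_coeff c k m * (c q * Phi (j + int m) (A q (exp_term A c (l - k) (e - q - m) v)) T)))"
      by (simp add: sum_distrib_left algebra_simps, rule sum.swap)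
    also have "\<dots> = (\<Sum>k\<le>l. C k * (\<Sum>m\<le>e. pow_coeff c k m * (\<Sum>q\<in>{1..e-m}. c q * Phi (j + int m) (A q (exp_term A c (l - k) (e - m - q) v)) T)))"
      by (subst sum_triangle_swap) (simp add: algebra_simps sum_distrib_left)
    also have "\<dots> = (\<Sum>k\<le>l. C k * X k)"
      unfolding X_def
    proof (rule sum.cong[OF refl], rule arg_cong[where f = "\<lambda>x. C _ * x"], rule sum.cong[OF refl])
      fix k m assume k: "k \<in> {..l}"
      have Pj: "fock_linear (Phi (j + int m))" using Phi by blast
      have "(\<Sum>q\<in>{1..e-m}. c q * Phi (j + int m) (A q (exp_term A c (l - k) (e - m - q) v)) T)
          = Phi (j + int m) (\<lambda>T. \<Sum>q\<in>{1..e-m}. c q * A q (exp_term A c (l - k) (e - m - q) v) T) T"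
        by (rule fock_linear_sum_scale[OF Pj, symmetric]) (auto intro!: mAq mP v)
      also have "\<dots> = Phi (j + int m) (exp_term A c (Suc l - k) (e - m) v) T"
        using k by (simp add: Suc_diff_le)
      finally show "pow_coeff c k m * (\<Sum>q\<in>{1..e-m}. c q * Phi (j + int m) (A q (exp_term A c (l - k) (e - m - q) v)) T)
          = pow_coeff c k m * Phi (j + int m) (exp_term A c (Suc l - k) (e - m) v) T" by simp
    qed
    finally show ?thesis .
  qed
  have P2: "(\<Sum>q\<in>{1..e}. c q * (\<Sum>k\<le>l. C k *
            (\<Sum>m\<le>e-q. pow_coeff c k m * Phi (j + int m + int q) (exp_term A c (l - k) (e - q - m) v) T)))
        = (\<Sum>k\<le>l. C k * X (Suc k))"
  proof -
    have "(\<Sum>q\<in>{1..e}. c q * (\<Sum>k\<le>l. C k *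
            (\<Sum>m\<le>e-q. pow_coeff c k m * Phi (j + int m + int q) (exp_term A c (l - k) (e - q - m) v) T)))
      = (\<Sum>k\<le>l. C k * (\<Sum>q\<in>{1..e}. \<Sum>m\<le>e-q. c q * pow_coeff c k m * Phi (j + int q + int m) (exp_term A c (l - k) (e - q - m) v) T))"
      by (simp add: sum_distrib_left algebra_simps, rule sum.swap)
    also have "\<dots> = (\<Sum>k\<le>l. C k * (\<Sum>m\<le>e. \<Sum>q\<in>{1..m}. c q * pow_coeff c k (m - q) * Phi (j + int m) (exp_term A c (l - k) (e - m) v) T))"
    proof (rule sum.cong[OF refl])
      fix k
      let ?F = "\<lambda>q m. c q * pow_coeff c k (m - q) * Phi (j + int m) (exp_term A c (l - k) (e - m) v) T"
      have "(\<Sum>q\<in>{1..e}. \<Sum>m\<le>e-q. c q * pow_coeff c k m * Phi (j + int q + int m) (exp_term A c (l - k) (e - q - m) v) T)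
          = (\<Sum>q\<in>{1..e}. \<Sum>m\<le>e-q. ?F q (q + m))"
        by (simp add: algebra_simps)
      also have "\<dots> = (\<Sum>m\<le>e. \<Sum>q\<in>{1..m}. ?F q m)" by (rule sum_triangle_shift_swap)
      finally show "C k * (\<Sum>q\<in>{1..e}. \<Sum>m\<le>e-q. c q * pow_coeff c k m * Phi (j + int q + int m) (exp_term A c (l - k) (e - q - m) v) T)
          = C k * (\<Sum>m\<le>e. \<Sum>q\<in>{1..m}. ?F q m)" by simp
    qed
    also have "\<dots> = (\<Sum>k\<le>l. C k * X (Suc k))"
      unfolding X_def by (simp add: sum_distrib_right)
    finally show ?thesis .
  qed
  have S1: "exp_term A c (Suc l) e (Phi j v) T = (\<Sum>k\<le>l. C k * X k) + (\<Sum>k\<le>l. C k * X (Suc k))"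
    unfolding S0 P1[symmetric] P2[symmetric]
    by (simp add: inner distrib_left sum.distrib)
  show ?case
    unfolding S1 X_def[symmetric] sum_choose_Suc_split C_def ..
qed

lemma length_le_sum_list_nonzero: "0 \<notin> set (qs :: nat list) \<Longrightarrow> length qs \<le> sum_list qs"
  by (induction qs) auto

lemma length_comps_le: "qs \<in> comps e \<Longrightarrow> length qs \<le> e"
  unfolding comps_def using length_le_sum_list_nonzero by auto

lemma finite_comps: "finite (comps e)"
proof -
  have "comps e \<subseteq> {xs. set xs \<subseteq> {..e} \<and> length xs \<le> e}"
    using length_comps_le unfolding comps_def by (auto intro: member_le_sum_list)
  moreover have "finite {xs. set xs \<subseteq> {..e} \<and> length xs \<le> e}"
    by (rule finite_lists_length_le) simp
  ultimately show ?thesis by (rule finite_subset)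
qed

lemma comps_length_Suc:
  "{qs \<in> comps e. length qs = Suc l} = (\<lambda>(q, qs). q # qs) ` (SIGMA q:{1..e}. {qs \<in> comps (e - q). length qs = l})"
proof
  show "{qs \<in> comps e. length qs = Suc l} \<subseteq> (\<lambda>(q, qs). q # qs) ` (SIGMA q:{1..e}. {qs \<in> comps (e - q). length qs = l})"
  proof
    fix xs assume xs: "xs \<in> {qs \<in> comps e. length qs = Suc l}"
    then obtain q qs where xq: "xs = q # qs" by (cases xs) auto
    have "q \<in> {1..e}" "qs \<in> comps (e - q)" "length qs = l" using xs xq unfolding comps_def by auto
    then show "xs \<in> (\<lambda>(q, qs). q # qs) ` (SIGMA q:{1..e}. {qs \<in> comps (e - q). length qs = l})"
      using xq by force
  qed
  show "(\<lambda>(q, qs). q # qs) ` (SIGMA q:{1..e}. {qs \<in> comps (e - q). length qs = l}) \<subseteq> {qs \<in> comps e. length qs = Suc l}"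
    unfolding comps_def by auto
qed

lemma maya_supp_apply_ops:
  assumes A: "\<forall>q>0. fock_linear (A q)" and v: "maya_supp v"
  shows "0 \<notin> set qs \<Longrightarrow> maya_supp (apply_ops A qs v)"
proof (induction qs)
  case Nil then show ?case using v by simp
next
  case (Cons q qs)
  then show ?case using A fock_linear_maya_supp by auto
qed

lemma sum_comps_length_eq_exp_term:
  assumes A: "\<forall>q>0. fock_linear (A q)" and v: "maya_supp v"
  shows "(\<Sum>qs\<in>{qs \<in> comps e. length qs = l}. (\<Prod>q\<leftarrow>qs. c q) * apply_ops A qs v T) = exp_term A c l e v T"
proof (induction l arbitrary: e T)
  case 0
  have "{qs \<in> comps e. length qs = 0} = (if e = 0 then {[]} else {})"
    unfolding comps_def by auto
  then show ?case by simp
next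
  case (Suc l)
  let ?S = "\<lambda>q. {qs \<in> comps (e - q). length qs = l}"
  have inj: "inj_on (\<lambda>(q, qs). q # qs) (SIGMA q:{1..e}. ?S q)"
    by (auto simp: inj_on_def)
  have fS: "finite (?S q)" for q using finite_comps[of "e - q"] by simp
  have "(\<Sum>qs\<in>{qs \<in> comps e. length qs = Suc l}. (\<Prod>q\<leftarrow>qs. c q) * apply_ops A qs v T)
      = (\<Sum>(q, qs)\<in>(SIGMA q:{1..e}. ?S q). (c q * (\<Prod>q\<leftarrow>qs. c q)) * A q (apply_ops A qs v) T)"
    unfolding comps_length_Suc by (subst sum.reindex[OF inj]) (simp add: case_prod_unfold)
  also have "\<dots> = (\<Sum>q\<in>{1..e}. \<Sum>qs\<in>?S q. (c q * (\<Prod>q\<leftarrow>qs. c q)) * A q (apply_ops A qs v) T)"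
    by (rule sum.Sigma[symmetric]) (auto simp: fS)
  also have "\<dots> = (\<Sum>q\<in>{1..e}. c q * A q (exp_term A c l (e - q) v) T)"
  proof (rule sum.cong[OF refl])
    fix q assume q: "q \<in> {1..e}"
    have Aq: "fock_linear (A q)" using A q by auto
    have "(\<Sum>qs\<in>?S q. (c q * (\<Prod>q\<leftarrow>qs. c q)) * A q (apply_ops A qs v) T)
        = c q * (\<Sum>qs\<in>?S q. (\<Prod>q\<leftarrow>qs. c q) * A q (apply_ops A qs v) T)"
      by (simp add: sum_distrib_left mult.assoc)
    also have "(\<Sum>qs\<in>?S q. (\<Prod>q\<leftarrow>qs. c q) * A q (apply_ops A qs v) T)
        = A q (\<lambda>T. \<Sum>qs\<in>?S q. (\<Prod>q\<leftarrow>qs. c q) * apply_ops A qs v T) T"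
      by (rule fock_linear_sum_scale[OF Aq fS, symmetric]) (auto intro!: maya_supp_apply_ops[OF A v] simp: comps_def)
    also have "(\<lambda>T. \<Sum>qs\<in>?S q. (\<Prod>q\<leftarrow>qs. c q) * apply_ops A qs v T) = exp_term A c l (e - q) v"
      by (rule ext, rule Suc.IH)
    finally show "(\<Sum>qs\<in>?S q. (c q * (\<Prod>q\<leftarrow>qs. c q)) * A q (apply_ops A qs v) T)
        = c q * A q (exp_term A c l (e - q) v) T" .
  qed
  finally show ?case by simp
qed

lemma exp_coeff_eq_sum_exp_term:
  assumes A: "\<forall>q>0. fock_linear (A q)" and v: "maya_supp v"
  shows "exp_coeff A c e v T = (\<Sum>l\<le>e. exp_term A c l e v T / fact l)"
proof -
  have "exp_coeff A c e v T = (\<Sum>qs\<in>comps e. (\<Prod>q\<leftarrow>qs. c q) / fact (length qs) * apply_ops A qs v T)"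
    unfolding exp_coeff_def by simp
  also have "\<dots> = (\<Sum>l\<le>e. \<Sum>qs\<in>{qs \<in> comps e. length qs = l}. (\<Prod>q\<leftarrow>qs. c q) / fact (length qs) * apply_ops A qs v T)"
    by (rule sum.group[symmetric]) (auto simp: finite_comps length_comps_le)
  also have "\<dots> = (\<Sum>l\<le>e. (\<Sum>qs\<in>{qs \<in> comps e. length qs = l}. (\<Prod>q\<leftarrow>qs. c q) * apply_ops A qs v T) / fact l)"
    by (rule sum.cong[OF refl]) (auto simp: sum_divide_distrib intro!: sum.cong)
  also have "\<dots> = (\<Sum>l\<le>e. exp_term A c l e v T / fact l)"
    by (simp add: sum_comps_length_eq_exp_term[OF A v])
  finally show ?thesis .
qed

definition exp_series_coeff :: "(nat \<Rightarrow> complex) \<Rightarrow> nat \<Rightarrow> complex" where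
  "exp_series_coeff c m = (\<Sum>k\<le>m. pow_coeff c k m / fact k)"

lemma Phi_exp_coeff_commute:
  assumes A: "\<forall>q>0. fock_linear (A q)" and Phi: "\<forall>j. fock_linear (Phi j)"
    and comm: "\<And>q j w T. q > 0 \<Longrightarrow> maya_supp w \<Longrightarrow> Phi j (A q w) T = A q (Phi j w) T + Phi (j + int q) w T"
    and v: "maya_supp v"
  shows "Phi j (exp_coeff A c e v) T = (\<Sum>m\<le>e. exp_series_coeff c m * exp_coeff A c (e - m) (Phi (j + int m) v) T)"
proof -
  have Pj: "fock_linear (Phi j)" using Phi by blast
  have mPhi: "maya_supp w \<Longrightarrow> maya_supp (Phi j' w)" for j' w using fock_linear_maya_supp Phi by blast
  have "exp_coeff A c e v = (\<lambda>T. \<Sum>l\<le>e. inverse (fact l) * exp_term A c l e v T)"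
    by (rule ext) (simp add: exp_coeff_eq_sum_exp_term[OF A v] field_simps)
  then have "Phi j (exp_coeff A c e v) T = (\<Sum>l\<le>e. inverse (fact l) * Phi j (exp_term A c l e v) T)"
    by (simp add: fock_linear_sum_scale[OF Pj] maya_supp_exp_term[OF A v])
  also have "\<dots> = (\<Sum>l\<le>e. (\<Sum>k\<le>l. of_nat (l choose k) *
            (\<Sum>m\<le>e. pow_coeff c k m * exp_term A c (l - k) (e - m) (Phi (j + int m) v) T)) / fact l)"
    by (simp add: Phi_exp_term_commute[OF A Phi comm v] field_simps)
  also have "\<dots> = (\<Sum>m\<le>e. (\<Sum>k\<le>m. pow_coeff c k m / fact k) *
            (\<Sum>l\<le>e-m. exp_term A c l (e - m) (Phi (j + int m) v) T / fact l))"
    by (rule sum_binomial_exp_product[where G = "\<lambda>l m. exp_term A c l (e - m) (Phi (j + int m) v) T"])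
       (auto simp: pow_coeff_eq_0 exp_term_eq_0[OF A])
  also have "\<dots> = (\<Sum>m\<le>e. exp_series_coeff c m * exp_coeff A c (e - m) (Phi (j + int m) v) T)"
    by (simp add: exp_series_coeff_def exp_coeff_eq_sum_exp_term[OF A mPhi[OF v]])
  finally show ?thesis .
qed

lemma exp_coeff_Phi_commute:
  assumes A: "\<forall>q>0. fock_linear (A q)" and Phi: "\<forall>j. fock_linear (Phi j)"
    and comm: "\<And>q j w T. q > 0 \<Longrightarrow> maya_supp w \<Longrightarrow> A q (Phi j w) T = Phi j (A q w) T + Phi (j + int q) w T"
    and v: "maya_supp v"
  shows "exp_coeff A c e (Phi j v) T = (\<Sum>m\<le>e. exp_series_coeff c m * Phi (j + int m) (exp_coeff A c (e - m) v) T)"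
proof -
  have mPhi: "maya_supp w \<Longrightarrow> maya_supp (Phi j' w)" for j' w using fock_linear_maya_supp Phi by blast
  have "exp_coeff A c e (Phi j v) T = (\<Sum>l\<le>e. (\<Sum>k\<le>l. of_nat (l choose k) *
            (\<Sum>m\<le>e. pow_coeff c k m * Phi (j + int m) (exp_term A c (l - k) (e - m) v) T)) / fact l)"
    by (simp add: exp_coeff_eq_sum_exp_term[OF A mPhi[OF v]] exp_term_Phi_commute[OF A Phi comm v])
  also have "\<dots> = (\<Sum>m\<le>e. (\<Sum>k\<le>m. pow_coeff c k m / fact k) *
            (\<Sum>l\<le>e-m. Phi (j + int m) (exp_term A c l (e - m) v) T / fact l))"
    by (rule sum_binomial_exp_product[where G = "\<lambda>l m. Phi (j + int m) (exp_term A c l (e - m) v) T"])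
       (auto simp: pow_coeff_eq_0 exp_term_eq_0[OF A] fock_linear_zero Phi)
  also have "\<dots> = (\<Sum>m\<le>e. exp_series_coeff c m * Phi (j + int m) (exp_coeff A c (e - m) v) T)"
  proof (rule sum.cong[OF refl])
    fix m
    have Pj: "fock_linear (Phi (j + int m))" using Phi by blast
    have "exp_coeff A c (e - m) v = (\<lambda>T. \<Sum>l\<le>e - m. inverse (fact l) * exp_term A c l (e - m) v T)"
      by (rule ext) (simp add: exp_coeff_eq_sum_exp_term[OF A v] field_simps)
    then have "Phi (j + int m) (exp_coeff A c (e - m) v) T
        = (\<Sum>l\<le>e-m. inverse (fact l) * Phi (j + int m) (exp_term A c l (e - m) v) T)"
      by (simp add: fock_linear_sum_scale[OF Pj] maya_supp_exp_term[OF A v])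
    then show "(\<Sum>k\<le>m. pow_coeff c k m / fact k) * (\<Sum>l\<le>e-m. Phi (j + int m) (exp_term A c l (e - m) v) T / fact l)
        = exp_series_coeff c m * Phi (j + int m) (exp_coeff A c (e - m) v) T"
      by (simp add: exp_series_coeff_def field_simps)
  qed
  finally show ?thesis .
qed

lemma apply_ops_scale:
  assumes A: "\<forall>q>0. fock_linear (A q)"
  shows "0 \<notin> set qs \<Longrightarrow> apply_ops A qs (\<lambda>T. k * v T) = (\<lambda>T. k * apply_ops A qs v T)"
proof (induction qs)
  case Nil then show ?case by simp
next
  case (Cons q qs)
  then have "fock_linear (A q)" using A by auto
  then show ?case using Cons by (auto simp: fock_linear_scale)
qed

lemma exp_coeff_scale:
  assumes A: "\<forall>q>0. fock_linear (A q)"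
  shows "exp_coeff A c d (\<lambda>T. k * v T) T0 = k * exp_coeff A c d v T0"
  unfolding exp_coeff_def
  by (simp add: sum_distrib_left apply_ops_scale[OF A] comps_def algebra_simps)

lemma comps_0: "comps 0 = {[]}"
proof -
  have "qs = []" if "sum_list qs = (0::nat)" "0 \<notin> set qs" for qs
    using that by (cases qs) auto
  then show ?thesis unfolding comps_def by auto
qed

lemma exp_coeff_0: "exp_coeff A c 0 v T = v T"
  unfolding exp_coeff_def comps_0 by simp

lemma exp_coeff_pos_eq_0:
  assumes "0 < d" "\<And>qs. qs \<noteq> [] \<Longrightarrow> 0 \<notin> set qs \<Longrightarrow> apply_ops A qs v T = 0"
  shows "exp_coeff A c d v T = 0"
  unfolding exp_coeff_def
proof (rule sum.neutral, rule ballI)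
  fix qs assume "qs \<in> comps d"
  then have "qs \<noteq> []" "0 \<notin> set qs" using assms(1) unfolding comps_def by auto
  then show "(\<Prod>q\<leftarrow>qs. c q) / fact (length qs) * apply_ops A qs v T = 0" using assms(2) by simp
qed

section \<open>The series exp(phi) = (1 + t y) / (1 - y)\<close>

definition series_fps :: "(nat \<Rightarrow> complex) \<Rightarrow> complex fps" where
  "series_fps c = Abs_fps (\<lambda>q. if q = 0 then 0 else c q)"

lemma pow_coeff_eq_fps_nth: "pow_coeff c k m = fps_nth (series_fps c ^ k) m"
proof (induction k arbitrary: m)
  case 0 then show ?case by simp
next
  case (Suc k)
  have "fps_nth (series_fps c ^ Suc k) m = (\<Sum>i=0..m. fps_nth (series_fps c) i * fps_nth (series_fps c ^ k) (m - i))"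
    by (simp add: fps_mult_nth)
  also have "\<dots> = (\<Sum>i\<in>{1..m}. c i * pow_coeff c k (m - i))"
  proof -
    have "(\<Sum>i=0..m. fps_nth (series_fps c) i * fps_nth (series_fps c ^ k) (m - i)) = (\<Sum>i\<in>{1..m}. fps_nth (series_fps c) i * fps_nth (series_fps c ^ k) (m - i))"
      by (rule sum.mono_neutral_right) (auto simp: series_fps_def)
    then show ?thesis by (simp add: series_fps_def Suc.IH)
  qed
  finally show ?case by simp
qed

lemma pow_coeff_deriv:
  assumes "0 < m" "0 < k"
  shows "of_nat m * pow_coeff c k m = of_nat k * (\<Sum>i<m. of_nat (i + 1) * c (i + 1) * pow_coeff c (k - 1) (m - 1 - i))"
proof -
  have "fps_nth (fps_deriv (series_fps c ^ k)) (m - 1) = fps_nth (of_nat k * fps_deriv (series_fps c) * series_fps c ^ (k - 1)) (m - 1)"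
    by (simp add: fps_deriv_power')
  moreover have "fps_nth (fps_deriv (series_fps c ^ k)) (m - 1) = of_nat m * pow_coeff c k m"
    using assms by (simp add: pow_coeff_eq_fps_nth)
  moreover have "fps_nth (of_nat k * fps_deriv (series_fps c) * series_fps c ^ (k - 1)) (m - 1)
      = of_nat k * (\<Sum>i=0..m-1. of_nat (i + 1) * c (i + 1) * pow_coeff c (k - 1) (m - 1 - i))"
  proof -
    have "fps_nth (of_nat k * fps_deriv (series_fps c) * series_fps c ^ (k - 1)) (m - 1)
        = of_nat k * fps_nth (fps_deriv (series_fps c) * series_fps c ^ (k - 1)) (m - 1)"
      by (simp only: mult.assoc fps_mult_of_nat_nth)
    also have "fps_nth (fps_deriv (series_fps c) * series_fps c ^ (k - 1)) (m - 1)
        = (\<Sum>i=0..m-1. of_nat (i + 1) * c (i + 1) * pow_coeff c (k - 1) (m - 1 - i))"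
      by (simp add: fps_mult_nth pow_coeff_eq_fps_nth series_fps_def del: of_nat_Suc)
    finally show ?thesis .
  qed
  moreover have "{0..m-1} = {..<m}" using assms by auto
  ultimately show ?thesis by simp
qed

lemma exp_series_coeff_rec:
  assumes m: "0 < m"
  shows "of_nat m * exp_series_coeff c m = (\<Sum>i<m. of_nat (i + 1) * c (i + 1) * exp_series_coeff c (m - 1 - i))"
proof -
  obtain n where n: "m = Suc n" using m by (cases m) auto
  have "of_nat m * exp_series_coeff c m = (\<Sum>k\<le>Suc n. of_nat m * pow_coeff c k m / fact k)"
    unfolding exp_series_coeff_def n by (simp add: sum_distrib_left del: pow_coeff.simps sum.atMost_Suc)
  also have "\<dots> = (\<Sum>k\<le>n. of_nat m * pow_coeff c (Suc k) m / fact (Suc k))"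
    by (simp only: sum.atMost_Suc_shift, simp add: n pow_coeff.simps(1) del: pow_coeff.simps(2))
  also have "\<dots> = (\<Sum>k\<le>n. (\<Sum>i<m. of_nat (i + 1) * c (i + 1) * pow_coeff c k (m - 1 - i)) / fact k)"
  proof (rule sum.cong[OF refl])
    fix k
    have eq: "of_nat m * pow_coeff c (Suc k) m = of_nat (Suc k) * (\<Sum>i<m. of_nat (i + 1) * c (i + 1) * pow_coeff c k (m - 1 - i))"
      using pow_coeff_deriv[OF m, of "Suc k" c] by (simp del: pow_coeff.simps)
    show "of_nat m * pow_coeff c (Suc k) m / fact (Suc k) = (\<Sum>i<m. of_nat (i + 1) * c (i + 1) * pow_coeff c k (m - 1 - i)) / fact k"
      unfolding eq fact_Suc by (simp del: of_nat_Suc pow_coeff.simps)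
  qed
  also have "\<dots> = (\<Sum>i<m. of_nat (i + 1) * c (i + 1) * (\<Sum>k\<le>n. pow_coeff c k (m - 1 - i) / fact k))"
    by (simp add: sum_divide_distrib sum_distrib_left, rule sum.swap)
  also have "\<dots> = (\<Sum>i<m. of_nat (i + 1) * c (i + 1) * exp_series_coeff c (m - 1 - i))"
  proof (rule sum.cong[OF refl])
    fix i assume i: "i \<in> {..<m}"
    have "(\<Sum>k\<le>n. pow_coeff c k (m - 1 - i) / fact k) = (\<Sum>k\<le>m - 1 - i. pow_coeff c k (m - 1 - i) / fact k)"
      by (rule sum.mono_neutral_right) (auto simp: n pow_coeff_eq_0)
    then show "of_nat (i + 1) * c (i + 1) * (\<Sum>k\<le>n. pow_coeff c k (m - 1 - i) / fact k) = of_nat (i + 1) * c (i + 1) * exp_series_coeff c (m - 1 - i)"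
      by (simp add: exp_series_coeff_def)
  qed
  finally show ?thesis .
qed

lemma one_plus_times_geometric_sum: "(1 + t) * (\<Sum>i<n. (-t) ^ (i + 1)) = - t - (- t) ^ (n + 1 :: nat)" for t :: complex
  by (induction n) (auto simp: algebra_simps)

lemma exp_series_coeff_phi_coef: "exp_series_coeff (phi_coef t) m = (if m = 0 then 1 else 1 + t)"
proof (induction m rule: less_induct)
  case (less m)
  show ?case
  proof (cases m)
    case 0 then show ?thesis by (simp add: exp_series_coeff_def)
  next
    case (Suc n)
    have c: "of_nat (i + 1) * phi_coef t (i + 1) = 1 - (-t) ^ (i + 1)" for i
      unfolding phi_coef_def by (simp del: of_nat_Suc)
    have "of_nat m * exp_series_coeff (phi_coef t) m = (\<Sum>i<m. of_nat (i + 1) * phi_coef t (i + 1) * exp_series_coeff (phi_coef t) (m - 1 - i))"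
      using exp_series_coeff_rec[of m "phi_coef t"] Suc by simp
    also have "\<dots> = (\<Sum>i<Suc n. (1 - (-t) ^ (i + 1)) * exp_series_coeff (phi_coef t) (m - 1 - i))"
      unfolding c Suc by (rule refl)
    also have "\<dots> = (\<Sum>i<n. (1 - (-t) ^ (i + 1)) * (1 + t)) + (1 - (-t) ^ (n + 1))"
    proof -
      have "exp_series_coeff (phi_coef t) (m - 1 - i) = 1 + t" if "i < n" for i
        using less.IH[of "m - 1 - i"] that Suc by auto
      moreover have "exp_series_coeff (phi_coef t) (m - 1 - n) = 1"
        using less.IH[of "m - 1 - n"] Suc by auto
      ultimately show ?thesis by simp
    qed
    also have "\<dots> = of_nat n * (1 + t) - (1 + t) * (\<Sum>i<n. (-t) ^ (i + 1)) + (1 - (-t) ^ (n + 1))"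
    proof -
      have "(\<Sum>i<n. (1 - (-t) ^ (i + 1)) * (1 + t)) = (\<Sum>i<n. (1 + t)) - (\<Sum>i<n. (-t) ^ (i + 1) * (1 + t))"
        unfolding left_diff_distrib mult.left_neutral sum_subtractf by (rule refl)
      also have "\<dots> = of_nat n * (1 + t) - (1 + t) * (\<Sum>i<n. (-t) ^ (i + 1))"
        unfolding sum_constant card_lessThan sum_distrib_left by (simp add: mult.commute)
      finally show ?thesis by simp
    qed
    also have "\<dots> = of_nat m * (1 + t)"
      unfolding one_plus_times_geometric_sum using Suc by (simp add: algebra_simps)
    finally have "of_nat m * exp_series_coeff (phi_coef t) m = of_nat m * (1 + t)" .
    moreover have nz: "(of_nat m :: complex) \<noteq> 0" using Suc by (simp del: of_nat_Suc)
    ultimately have "exp_series_coeff (phi_coef t) m = 1 + t" by (simp only: mult_left_cancel[OF nz])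
    then show ?thesis using Suc by simp
  qed
qed

text \<open>The coefficients of \<open>(1 + t y) / (1 - y)\<close>, extended by \<open>0\<close> to negative degrees.\<close>
definition hop_weight :: "complex \<Rightarrow> int \<Rightarrow> complex" where
  "hop_weight t m = (if m < 0 then 0 else if m = 0 then 1 else 1 + t)"

lemma exp_series_coeff_phi_coef_eq_hop_weight: "exp_series_coeff (phi_coef t) m = hop_weight t (int m)"
  unfolding exp_series_coeff_phi_coef hop_weight_def by simp

section \<open>Interlacing sequences\<close>

fun interlaces :: "int list \<Rightarrow> int list \<Rightarrow> bool" where
  "interlaces [] [] = True"
| "interlaces [y] [x] = (x \<le> y)"
| "interlaces (y # y' # ys) (x # xs) = (y' \<le> x \<and> x \<le> y \<and> interlaces (y' # ys) xs)"
| "interlaces _ _ = False"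

fun interlace_weight :: "complex \<Rightarrow> int list \<Rightarrow> int list \<Rightarrow> complex" where
  "interlace_weight t (y # y' # ys) (x # xs) = (if x = y then 1 else if x = y' then t else 1 + t) * interlace_weight t (y' # ys) xs"
| "interlace_weight t [y] [x] = (if x = y then 1 else 1 + t)"
| "interlace_weight t _ _ = 1"

lemma interlaces_length: "interlaces ys xs \<Longrightarrow> length ys = length xs"
  by (induction ys xs rule: interlaces.induct) auto

lemma interlaces_sum_list_le: "interlaces ys xs \<Longrightarrow> sum_list xs \<le> sum_list ys"
  by (induction ys xs rule: interlaces.induct) auto

lemma interlaces_Cons_head_swap:
  assumes "a \<le> y" "a \<le> y'"
  shows "interlaces (y # zs) (a # xs) = interlaces (y' # zs) (a # xs)"
  using assms by (cases zs; cases xs) auto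

lemma interlace_weight_Cons_head_swap:
  assumes "a < y" "a < y'"
  shows "interlace_weight t (y # zs) (a # xs) = interlace_weight t (y' # zs) (a # xs)"
  using assms by (cases zs; cases xs) auto

lemma interlaces_iff_nth:
  "interlaces ys xs \<longleftrightarrow> length ys = length xs \<and>
     (\<forall>i<length xs. xs ! i \<le> ys ! i \<and> (Suc i < length ys \<longrightarrow> ys ! Suc i \<le> xs ! i))"
proof (induction ys xs rule: interlaces.induct)
  case (3 y y' ys x xs)
  show ?case
  proof
    assume "interlaces (y # y' # ys) (x # xs)"
    then show "length (y # y' # ys) = length (x # xs) \<and>
     (\<forall>i<length (x # xs). (x # xs) ! i \<le> (y # y' # ys) ! i \<and>
        (Suc i < length (y # y' # ys) \<longrightarrow> (y # y' # ys) ! Suc i \<le> (x # xs) ! i))"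
      using 3 by (auto simp: nth_Cons' less_Suc_eq_0_disj)
  next
    assume H: "length (y # y' # ys) = length (x # xs) \<and>
     (\<forall>i<length (x # xs). (x # xs) ! i \<le> (y # y' # ys) ! i \<and>
        (Suc i < length (y # y' # ys) \<longrightarrow> (y # y' # ys) ! Suc i \<le> (x # xs) ! i))"
    have "y' \<le> x" "x \<le> y" using H[THEN conjunct2, rule_format, of 0] by auto
    moreover have "interlaces (y' # ys) xs"
    proof -
      have "\<forall>i<length xs. xs ! i \<le> (y' # ys) ! i \<and> (Suc i < length (y' # ys) \<longrightarrow> (y' # ys) ! Suc i \<le> xs ! i)"
      proof (intro allI impI)
        fix i assume "i < length xs"
        then show "xs ! i \<le> (y' # ys) ! i \<and> (Suc i < length (y' # ys) \<longrightarrow> (y' # ys) ! Suc i \<le> xs ! i)"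
          using H[THEN conjunct2, rule_format, of "Suc i"] by auto
      qed
      then show ?thesis using 3 H by simp
    qed
    ultimately show "interlaces (y # y' # ys) (x # xs)" by simp
  qed
qed (auto simp: nth_Cons')

lemma interlace_weight_eq_prod:
  "length ys = length xs \<Longrightarrow> interlace_weight t ys xs =
     (\<Prod>i<length xs. if xs ! i = ys ! i then 1 else if Suc i < length ys \<and> xs ! i = ys ! Suc i then t else 1 + t)"
proof (induction t ys xs rule: interlace_weight.induct)
  case (1 t y y' ys x xs)
  have "interlace_weight t (y # y' # ys) (x # xs) = (if x = y then 1 else if x = y' then t else 1 + t) * interlace_weight t (y' # ys) xs"
    by simp
  also have "interlace_weight t (y' # ys) xs = (\<Prod>i<length xs. if xs ! i = (y' # ys) ! i then 1
      else if Suc i < length (y' # ys) \<and> xs ! i = (y' # ys) ! Suc i then t else 1 + t)"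
    using 1 by simp
  finally have eq: "interlace_weight t (y # y' # ys) (x # xs) = (if x = y then 1 else if x = y' then t else 1 + t) *
     (\<Prod>i<length xs. if xs ! i = (y' # ys) ! i then 1
      else if Suc i < length (y' # ys) \<and> xs ! i = (y' # ys) ! Suc i then t else 1 + t)" .
  define G where "G i = (if (x # xs) ! i = (y # y' # ys) ! i then 1 else if Suc i < length (y # y' # ys) \<and> (x # xs) ! i = (y # y' # ys) ! Suc i then t else 1 + t)" for i
  have "(\<Prod>i<length (x # xs). G i) = G 0 * (\<Prod>i<length xs. G (Suc i))"
    by (simp only: length_Cons prod.lessThan_Suc_shift)
  also have "\<dots> = interlace_weight t (y # y' # ys) (x # xs)"
  proof -
    have "G (Suc i) = (if xs ! i = (y' # ys) ! i then 1
      else if Suc i < length (y' # ys) \<and> xs ! i = (y' # ys) ! Suc i then t else 1 + t)" for i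
      unfolding G_def by (simp only: nth_Cons_Suc length_Cons Suc_less_eq)
    moreover have "G 0 = (if x = y then 1 else if x = y' then t else 1 + t)"
      unfolding G_def by simp
    ultimately show ?thesis unfolding eq by simp
  qed
  finally show ?case unfolding G_def by simp
qed auto

text \<open>The recursion satisfied by the coefficient of \<open>x\<^sup>e\<close> in \<open>\<langle>xs| exp \<phi>\<^sub>\<plusminus> |ys\<rangle>\<close> when the
  top particle of \<open>xs\<close> is moved through the exponential.\<close>
fun matrix_rec :: "complex \<Rightarrow> int list \<Rightarrow> int list \<Rightarrow> int \<Rightarrow> complex" where
  "matrix_rec t [] ys e = (if ys = [] \<and> e = 0 then 1 else 0)"
| "matrix_rec t (x # xs) ys e = (if e < 0 then 0 else
     (\<Sum>i<length ys. (-1) ^ i * hop_weight t (ys ! i - x) * matrix_rec t xs (remove_nth i ys) (e - (ys ! i - x))))"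

text \<open>Only the terms removing one of the two largest entries of \<open>ys\<close> survive, and their
  difference produces the factor \<open>1\<close>, \<open>t\<close> or \<open>1 + t\<close>.\<close>
lemma alternating_sum_interlaces:
  assumes sx: "sorted_wrt (>) (x # xs)" and sy: "sorted_wrt (>) ys" and len: "length ys = Suc (length xs)"
  shows "(\<Sum>i<length ys. (-1) ^ i * hop_weight t (ys ! i - x) * (if interlaces (remove_nth i ys) xs then interlace_weight t (remove_nth i ys) xs else 0))
       = (if interlaces ys (x # xs) then interlace_weight t ys (x # xs) else 0)"
proof (cases xs)
  case Nil
  then obtain y where ys: "ys = [y]" using len by (cases ys) auto
  show ?thesis unfolding ys Nil by (simp add: hop_weight_def)
next
  case (Cons x1 xs')
  obtain y0 y1 zs where ys: "ys = y0 # y1 # zs" using len Cons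
    by (cases ys; cases "tl ys") auto
  have x1x: "x1 < x" using sx Cons by simp
  have y10: "y1 < y0" using sy ys by simp
  let ?f = "\<lambda>i. (-1) ^ i * hop_weight t (ys ! i - x) * (if interlaces (remove_nth i ys) xs then interlace_weight t (remove_nth i ys) xs else 0)"
  have rest: "?f (Suc (Suc i)) = 0" for i
  proof (cases "Suc (Suc i) < length ys")
    case False
    then have "remove_nth (Suc (Suc i)) ys = ys" unfolding remove_nth_def by simp
    then have "\<not> interlaces (remove_nth (Suc (Suc i)) ys) xs" using interlaces_length len by force
    then show ?thesis by simp
  next
    case True
    then have ii: "i < length zs" unfolding ys by simp
    have "zs ! i < y1" using sy ys ii by (simp add: sorted_wrt_nth_less)
    have "ys ! Suc (Suc i) < x \<or> \<not> interlaces (remove_nth (Suc (Suc i)) ys) xs"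
    proof (cases "ys ! Suc (Suc i) < x")
      case False
      then have "x \<le> zs ! i" unfolding ys by simp
      then have "\<not> (y1 \<le> x1)" using \<open>zs ! i < y1\<close> x1x by linarith
      then show ?thesis unfolding ys Cons by auto
    qed simp
    then show ?thesis by (auto simp: hop_weight_def)
  qed
  have ly: "length ys = Suc (Suc (length zs))" unfolding ys by simp
  have "(\<Sum>i<length ys. ?f i) = ?f 0 + (?f (Suc 0) + (\<Sum>i<length zs. ?f (Suc (Suc i))))"
    by (simp only: ly sum.lessThan_Suc_shift)
  also have "\<dots> = ?f 0 + ?f 1"
  proof -
    have "(\<Sum>i<length zs. ?f (Suc (Suc i))) = 0" by (rule sum.neutral) (use rest in blast)
    then show ?thesis by simp
  qed
  finally have S: "(\<Sum>i<length ys. ?f i) = ?f 0 + ?f 1" .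
  have f0: "?f 0 = hop_weight t (y0 - x) * (if interlaces (y1 # zs) xs then interlace_weight t (y1 # zs) xs else 0)"
    unfolding ys by simp
  have f1: "?f 1 = - hop_weight t (y1 - x) * (if interlaces (y0 # zs) xs then interlace_weight t (y0 # zs) xs else 0)"
    unfolding ys by simp
  have rhs: "(if interlaces ys (x # xs) then interlace_weight t ys (x # xs) else 0)
      = (if y1 \<le> x \<and> x \<le> y0 \<and> interlaces (y1 # zs) xs then
          (if x = y0 then 1 else if x = y1 then t else 1 + t) * interlace_weight t (y1 # zs) xs else 0)"
    unfolding ys by simp
  show ?thesis
  proof (cases "y0 < x")
    case True
    then show ?thesis unfolding S f0 f1 rhs using y10 by (simp add: hop_weight_def)
  next
    case x0: False
    show ?thesis
    proof (cases "y1 < x")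
      case True
      then show ?thesis unfolding S f0 f1 rhs using x0 by (auto simp: hop_weight_def)
    next
      case False
      have sw1: "interlaces (y0 # zs) xs = interlaces (y1 # zs) xs"
        unfolding Cons using interlaces_Cons_head_swap[where a=x1 and y=y0 and y'=y1 and zs=zs and xs=xs'] x1x False y10 by simp
      have sw2: "interlace_weight t (y0 # zs) xs = interlace_weight t (y1 # zs) xs"
        unfolding Cons using interlace_weight_Cons_head_swap[where a=x1 and y=y0 and y'=y1 and zs=zs and xs=xs' and t=t] x1x False y10 by simp
      show ?thesis
      proof (cases "x = y1")
        case True
        then show ?thesis unfolding S f0 f1 rhs sw1 sw2 using y10 by (auto simp: hop_weight_def algebra_simps)
      next
        case False
        then have "x < y1" using \<open>\<not> y1 < x\<close> by simp
        then show ?thesis unfolding S f0 f1 rhs sw1 sw2 using y10 by (auto simp: hop_weight_def algebra_simps)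
      qed
    qed
  qed
qed

lemma matrix_rec_closed_form:
  "sorted_wrt (>) xs \<Longrightarrow> sorted_wrt (>) ys \<Longrightarrow> length xs = length ys \<Longrightarrow>
   matrix_rec t xs ys e = (if e = sum_list ys - sum_list xs \<and> interlaces ys xs then interlace_weight t ys xs else 0)"
proof (induction xs arbitrary: ys e)
  case Nil then show ?case by simp
next
  case (Cons x xs)
  show ?case
  proof (cases "e < 0")
    case True
    then show ?thesis using interlaces_sum_list_le[of ys "x # xs"] by auto
  next
    case False
    have sxs: "sorted_wrt (>) xs" using Cons.prems by simp
    have "matrix_rec t (x # xs) ys e = (\<Sum>i<length ys. (-1) ^ i * hop_weight t (ys ! i - x) *
        (if e = sum_list ys - sum_list (x # xs) \<and> interlaces (remove_nth i ys) xs then interlace_weight t (remove_nth i ys) xs else 0))"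
      using False
    proof (simp del: power_Suc, intro sum.cong refl)
      fix i assume i: "i \<in> {..<length ys}"
      have "matrix_rec t xs (remove_nth i ys) (e - (ys ! i - x)) =
          (if e - (ys ! i - x) = sum_list (remove_nth i ys) - sum_list xs \<and> interlaces (remove_nth i ys) xs then interlace_weight t (remove_nth i ys) xs else 0)"
        using Cons.IH[OF sxs sorted_wrt_remove_nth[OF Cons.prems(2)]] Cons.prems(3) i by (simp add: length_remove_nth)
      then show "(-1) ^ i * hop_weight t (ys ! i - x) * matrix_rec t xs (remove_nth i ys) (e - (ys ! i - x)) =
         (-1) ^ i * hop_weight t (ys ! i - x) * (if e = sum_list ys - (x + sum_list xs) \<and> interlaces (remove_nth i ys) xs then interlace_weight t (remove_nth i ys) xs else 0)"
        using i by (simp add: sum_list_remove_nth algebra_simps)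
    qed
    also have "\<dots> = (if e = sum_list ys - sum_list (x # xs) then
        (\<Sum>i<length ys. (-1) ^ i * hop_weight t (ys ! i - x) * (if interlaces (remove_nth i ys) xs then interlace_weight t (remove_nth i ys) xs else 0)) else 0)"
      by auto
    also have "\<dots> = (if e = sum_list ys - sum_list (x # xs) \<and> interlaces ys (x # xs) then interlace_weight t ys (x # xs) else 0)"
    proof -
      have K: "(\<Sum>i<length ys. (-1) ^ i * hop_weight t (ys ! i - x) * (if interlaces (remove_nth i ys) xs then interlace_weight t (remove_nth i ys) xs else 0))
          = (if interlaces ys (x # xs) then interlace_weight t ys (x # xs) else 0)"
        by (rule alternating_sum_interlaces[OF Cons.prems(1,2)]) (use Cons.prems(3) in simp)
      show ?thesis unfolding K by simp
    qed
    finally show ?thesis .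
  qed
qed

section \<open>Matrix elements between basis vectors\<close>

abbreviation Jpos :: "nat \<Rightarrow> fvec \<Rightarrow> fvec" where "Jpos \<equiv> (\<lambda>q. Jop (int q))"

abbreviation Jneg :: "nat \<Rightarrow> fvec \<Rightarrow> fvec" where "Jneg \<equiv> (\<lambda>q. Jop (- int q))"

lemma fock_linear_Jpos: "\<forall>q>0. fock_linear (Jpos q)" using fock_linear_Jop by simp

lemma fock_linear_Jneg: "\<forall>q>0. fock_linear (Jneg q)" using fock_linear_Jop by simp

lemma apply_ops_Jpos_vacuum: "qs \<noteq> [] \<Longrightarrow> 0 \<notin> set qs \<Longrightarrow> apply_ops Jpos qs (basis_vec ({..f})) = (\<lambda>T. 0)"
proof (induction qs)
  case Nil then show ?case by simp
next
  case (Cons q qs)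
  have q: "int q \<noteq> 0" using Cons by auto
  show ?case
  proof (cases "qs = []")
    case True
    have "Jop (int q) (basis_vec ({..f})) T = 0" for T
    proof (cases "maya T")
      case True
      have "basis_vec ({..f}) (insert i (T - {i - int q})) = 0" for i
      proof -
        have "insert i (T - {i - int q}) \<noteq> {..f}"
        proof
          assume eq: "insert i (T - {i - int q}) = {..f}"
          then have "i \<le> f" unfolding atMost_def by auto
          then have "i - int q \<in> {..f}" unfolding atMost_def by simp
          moreover have "i - int q \<notin> insert i (T - {i - int q})" using q by auto
          ultimately show False using eq by simp
        qed
        then show ?thesis unfolding basis_vec_def by simp
      qed
      then show ?thesis using Jop_eq_sum_hops[OF True q] by simp
    next
      case False
      then show ?thesis using Jop_non_maya[OF maya_supp_basis_vec[OF maya_atMost_Un[of "{}"]]] by simp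
    qed
    then show ?thesis using True by auto
  next
    case False
    then have "apply_ops Jpos qs (basis_vec ({..f})) = (\<lambda>T. 0)" using Cons by simp
    then show ?thesis using fock_linear_zero[OF fock_linear_Jop[OF q]] by auto
  qed
qed

lemma apply_ops_Jneg_vacuum:
  assumes "qs \<noteq> []" "0 \<notin> set qs"
  shows "apply_ops Jneg qs v ({..f}) = 0"
proof (cases qs)
  case Nil then show ?thesis using assms by simp
next
  case (Cons q qs')
  then have q: "- int q \<noteq> 0" using assms by auto
  have K: "hop_sites (- int q) ({..f}) = {}" unfolding hop_sites_def atMost_def by auto
  have m: "maya ({..f})" using maya_atMost_Un[of "{}" f] by simp
  show ?thesis unfolding Cons using Jop_eq_sum_hops[OF m q] K by simp
qed

lemma ephi_plus_vacuum: "ephi_plus t e (basis_vec {..f}) {..f} = (if e = 0 then 1 else 0)"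
proof -
  have "exp_coeff Jpos (phi_coef t) (nat e) (basis_vec {..f}) {..f} = 0" if "0 < e"
    by (rule exp_coeff_pos_eq_0) (use that apply_ops_Jpos_vacuum in auto)
  then show ?thesis unfolding ephi_plus_def by (auto simp: exp_coeff_0 basis_vec_def)
qed

lemma ephi_minus_vacuum: "ephi_minus t (- e) (basis_vec {..f}) {..f} = (if e = 0 then 1 else 0)"
proof -
  have "exp_coeff Jneg (phi_coef t) (nat e) (basis_vec {..f}) {..f} = 0" if "0 < e"
    by (rule exp_coeff_pos_eq_0) (use that apply_ops_Jneg_vacuum in auto)
  then show ?thesis unfolding ephi_minus_def by (auto simp: exp_coeff_0 basis_vec_def)
qed

lemma ephi_plus_basis_vec:
  "sorted_wrt (>) xs \<Longrightarrow> sorted_wrt (>) ys \<Longrightarrow> length xs = length ys \<Longrightarrow>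
   \<forall>a\<in>set xs. f < a \<Longrightarrow> \<forall>a\<in>set ys. f < a \<Longrightarrow>
   ephi_plus t e (basis_vec ({..f} \<union> set ys)) ({..f} \<union> set xs) = matrix_rec t xs ys e"
proof (induction xs arbitrary: ys e)
  case Nil
  then show ?case by (simp add: ephi_plus_vacuum)
next
  case (Cons x xs)
  define T' where "T' = {..f} \<union> set xs"
  define S where "S = {..f} \<union> set ys"
  have mS: "maya S" unfolding S_def by (rule maya_atMost_Un) simp
  have sxs: "sorted_wrt (>) xs" using Cons.prems by simp
  have xT: "x \<notin> T'" using Cons.prems(1,4) unfolding T'_def atMost_def by auto
  have T: "{..f} \<union> set (x # xs) = insert x T'" unfolding T'_def by auto
  have wT: "wsign T' x = 1"
    using Cons.prems(1,4) unfolding T'_def by (intro wsign_eq_1_if_none_above) force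
  show ?case
  proof (cases "e < 0")
    case True then show ?thesis unfolding ephi_plus_def by simp
  next
    case False
    define d where "d = nat e"
    have mdl: "maya_supp (basis_vec S)" using maya_supp_basis_vec[OF mS] .
    have "ephi_plus t e (basis_vec S) (insert x T') = exp_coeff Jpos (phi_coef t) d (basis_vec S) (insert x T')"
      unfolding ephi_plus_def d_def using False by simp
    also have "\<dots> = psi x (exp_coeff Jpos (phi_coef t) d (basis_vec S)) T'"
      unfolding psi_def using xT wT by simp
    also have "\<dots> = (\<Sum>m\<le>d. exp_series_coeff (phi_coef t) m * exp_coeff Jpos (phi_coef t) (d - m) (psi (x + int m) (basis_vec S)) T')"
      by (rule Phi_exp_coeff_commute[OF fock_linear_Jpos]) (auto simp: fock_linear_psi psi_Jop_commute mdl)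
    also have "\<dots> = (\<Sum>m\<le>d. (if x + int m \<in> set ys then
          hop_weight t (int m) * wsign (S - {x + int m}) (x + int m) * exp_coeff Jpos (phi_coef t) (d - m) (basis_vec (S - {x + int m})) T' else 0))"
    proof (rule sum.cong[OF refl])
      fix m
      have iff: "x + int m \<in> S \<longleftrightarrow> x + int m \<in> set ys"
        using Cons.prems(4) unfolding S_def atMost_def by auto
      show "exp_series_coeff (phi_coef t) m * exp_coeff Jpos (phi_coef t) (d - m) (psi (x + int m) (basis_vec S)) T' = (if x + int m \<in> set ys then
          hop_weight t (int m) * wsign (S - {x + int m}) (x + int m) * exp_coeff Jpos (phi_coef t) (d - m) (basis_vec (S - {x + int m})) T' else 0)"
        unfolding psi_basis_vec exp_coeff_scale[OF fock_linear_Jpos] exp_series_coeff_phi_coef_eq_hop_weight using iff by auto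
    qed
    also have "\<dots> = (\<Sum>i<length ys. if 0 \<le> ys ! i - x \<and> ys ! i - x \<le> int d then
          hop_weight t (int (nat (ys ! i - x))) * wsign (S - {ys ! i}) (ys ! i) * exp_coeff Jpos (phi_coef t) (d - nat (ys ! i - x)) (basis_vec (S - {ys ! i})) T' else 0)"
      by (rule sum_shift_to_list_index[OF sorted_gt_distinct[OF Cons.prems(2)]])
    also have "\<dots> = (\<Sum>i<length ys. (-1) ^ i * hop_weight t (ys ! i - x) * matrix_rec t xs (remove_nth i ys) (e - (ys ! i - x)))"
    proof (rule sum.cong[OF refl])
      fix i assume i: "i \<in> {..<length ys}"
      have IH: "matrix_rec t xs (remove_nth i ys) (e - (ys ! i - x)) = ephi_plus t (e - (ys ! i - x)) (basis_vec ({..f} \<union> set (remove_nth i ys))) T'"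
        unfolding T'_def
        by (rule Cons.IH[OF sxs sorted_wrt_remove_nth[OF Cons.prems(2)], symmetric])
           (use Cons.prems i in \<open>auto simp: length_remove_nth set_remove_nth sorted_gt_distinct\<close>)
      have set_eq: "{..f} \<union> set (remove_nth i ys) = S - {ys ! i}"
        unfolding S_def using atMost_Un_remove_nth[OF Cons.prems(2) _ Cons.prems(5)] i by simp
      have ws: "wsign (S - {ys ! i}) (ys ! i) = (-1) ^ i"
        unfolding S_def using wsign_atMost_Un_nth[OF Cons.prems(2) _ Cons.prems(5)] i by simp
      show "(if 0 \<le> ys ! i - x \<and> ys ! i - x \<le> int d then
          hop_weight t (int (nat (ys ! i - x))) * wsign (S - {ys ! i}) (ys ! i) * exp_coeff Jpos (phi_coef t) (d - nat (ys ! i - x)) (basis_vec (S - {ys ! i})) T' else 0)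
          = (-1) ^ i * hop_weight t (ys ! i - x) * matrix_rec t xs (remove_nth i ys) (e - (ys ! i - x))"
        unfolding IH set_eq ws using False
        by (auto simp: ephi_plus_def hop_weight_def d_def nat_diff_distrib)
    qed
    finally show ?thesis unfolding T S_def using False by simp
  qed
qed

lemma ephi_minus_basis_vec:
  "sorted_wrt (>) xs \<Longrightarrow> sorted_wrt (>) ys \<Longrightarrow> length xs = length ys \<Longrightarrow>
   \<forall>a\<in>set xs. f < a \<Longrightarrow> \<forall>a\<in>set ys. f < a \<Longrightarrow>
   ephi_minus t (- e) (basis_vec ({..f} \<union> set xs)) ({..f} \<union> set ys) = matrix_rec t xs ys e"
proof (induction xs arbitrary: ys e)
  case Nil
  then show ?case by (simp add: ephi_minus_vacuum)
next
  case (Cons x xs)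
  define S' where "S' = {..f} \<union> set xs"
  define T where "T = {..f} \<union> set ys"
  have mS': "maya S'" unfolding S'_def by (rule maya_atMost_Un) simp
  have sxs: "sorted_wrt (>) xs" using Cons.prems by simp
  have xS: "x \<notin> S'" using Cons.prems(1,4) unfolding S'_def atMost_def by auto
  have S: "{..f} \<union> set (x # xs) = insert x S'" unfolding S'_def by auto
  have wS: "wsign S' x = 1"
    using Cons.prems(1,4) unfolding S'_def by (intro wsign_eq_1_if_none_above) force
  show ?case
  proof (cases "e < 0")
    case True then show ?thesis unfolding ephi_minus_def by simp
  next
    case False
    define d where "d = nat e"
    have mdl: "maya_supp (basis_vec S')" using maya_supp_basis_vec[OF mS'] .
    have "ephi_minus t (- e) (basis_vec (insert x S')) T = exp_coeff Jneg (phi_coef t) d (psistar x (basis_vec S')) T"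
      unfolding ephi_minus_def d_def psistar_basis_vec[OF xS wS] using False by simp
    also have "\<dots> = (\<Sum>m\<le>d. exp_series_coeff (phi_coef t) m * psistar (x + int m) (exp_coeff Jneg (phi_coef t) (d - m) (basis_vec S')) T)"
      by (rule exp_coeff_Phi_commute[OF fock_linear_Jneg]) (auto simp: fock_linear_psistar Jop_psistar_commute mdl)
    also have "\<dots> = (\<Sum>m\<le>d. (if x + int m \<in> set ys then
          hop_weight t (int m) * wsign (T - {x + int m}) (x + int m) * exp_coeff Jneg (phi_coef t) (d - m) (basis_vec S') (T - {x + int m}) else 0))"
    proof (rule sum.cong[OF refl])
      fix m
      have iff: "x + int m \<in> T \<longleftrightarrow> x + int m \<in> set ys"
        using Cons.prems(4) unfolding T_def atMost_def by auto
      show "exp_series_coeff (phi_coef t) m * psistar (x + int m) (exp_coeff Jneg (phi_coef t) (d - m) (basis_vec S')) T = (if x + int m \<in> set ys then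
          hop_weight t (int m) * wsign (T - {x + int m}) (x + int m) * exp_coeff Jneg (phi_coef t) (d - m) (basis_vec S') (T - {x + int m}) else 0)"
        unfolding psistar_def exp_series_coeff_phi_coef_eq_hop_weight using iff by auto
    qed
    also have "\<dots> = (\<Sum>i<length ys. if 0 \<le> ys ! i - x \<and> ys ! i - x \<le> int d then
          hop_weight t (int (nat (ys ! i - x))) * wsign (T - {ys ! i}) (ys ! i) * exp_coeff Jneg (phi_coef t) (d - nat (ys ! i - x)) (basis_vec S') (T - {ys ! i}) else 0)"
      by (rule sum_shift_to_list_index[OF sorted_gt_distinct[OF Cons.prems(2)]])
    also have "\<dots> = (\<Sum>i<length ys. (-1) ^ i * hop_weight t (ys ! i - x) * matrix_rec t xs (remove_nth i ys) (e - (ys ! i - x)))"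
    proof (rule sum.cong[OF refl])
      fix i assume i: "i \<in> {..<length ys}"
      have IH: "matrix_rec t xs (remove_nth i ys) (e - (ys ! i - x)) = ephi_minus t (- (e - (ys ! i - x))) (basis_vec S') ({..f} \<union> set (remove_nth i ys))"
        unfolding S'_def
        by (rule Cons.IH[OF sxs sorted_wrt_remove_nth[OF Cons.prems(2)], symmetric])
           (use Cons.prems i in \<open>auto simp: length_remove_nth set_remove_nth sorted_gt_distinct\<close>)
      have set_eq: "{..f} \<union> set (remove_nth i ys) = T - {ys ! i}"
        unfolding T_def using atMost_Un_remove_nth[OF Cons.prems(2) _ Cons.prems(5)] i by simp
      have ws: "wsign (T - {ys ! i}) (ys ! i) = (-1) ^ i"
        unfolding T_def using wsign_atMost_Un_nth[OF Cons.prems(2) _ Cons.prems(5)] i by simp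
      show "(if 0 \<le> ys ! i - x \<and> ys ! i - x \<le> int d then
          hop_weight t (int (nat (ys ! i - x))) * wsign (T - {ys ! i}) (ys ! i) * exp_coeff Jneg (phi_coef t) (d - nat (ys ! i - x)) (basis_vec S') (T - {ys ! i}) else 0)
          = (-1) ^ i * hop_weight t (ys ! i - x) * matrix_rec t xs (remove_nth i ys) (e - (ys ! i - x))"
        unfolding IH set_eq ws using False
        by (auto simp: ephi_minus_def hop_weight_def d_def nat_diff_distrib)
    qed
    finally show ?thesis unfolding S T_def using False by simp
  qed
qed

lemma ephi_plus_scale: "ephi_plus t e (\<lambda>U. c * v U) T = c * ephi_plus t e v T"
  unfolding ephi_plus_def using exp_coeff_scale[OF fock_linear_Jpos] by simp

lemma interlaces_append_zero_iff:
  assumes n: "1 \<le> n" "length lam = n" "length mu = n - 1" and l1: "\<forall>a\<in>set lam. 1 \<le> a"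
  shows "interlaces (map int lam) (map int mu @ [0]) \<longleftrightarrow> interlace lam mu"
proof -
  have len: "length (map int lam) = length (map int mu @ [0])" using n by simp
  have xs: "(map int mu @ [0]) ! i = (if i < n - 1 then int (mu ! i) else 0)" if "i < n" for i
    using that n by (auto simp: nth_append)
  have last: "0 \<le> int (lam ! (n - 1))" by simp
  show ?thesis
  proof
    assume H: "interlaces (map int lam) (map int mu @ [0])"
    show "interlace lam mu" unfolding interlace_def
    proof (intro allI impI)
      fix i assume i: "i < length mu"
      then have i1: "i < n" "Suc i < n" using n by auto
      have h: "(map int mu @ [0]) ! i \<le> map int lam ! i \<and> (Suc i < length (map int lam) \<longrightarrow> map int lam ! Suc i \<le> (map int mu @ [0]) ! i)"
        using H[unfolded interlaces_iff_nth] i1 n by simp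
      have "(map int mu @ [0]) ! i = int (mu ! i)" using xs[OF i1(1)] i1 by simp
      then show "mu ! i \<le> lam ! i \<and> lam ! (i + 1) \<le> mu ! i"
        using h i1 n by simp
    qed
  next
    assume I: "interlace lam mu"
    show "interlaces (map int lam) (map int mu @ [0])" unfolding interlaces_iff_nth
    proof (rule conjI[OF len], rule allI, rule impI)
      fix i assume i: "i < length (map int mu @ [0])"
      then have i': "i < n" using n by simp
      show "(map int mu @ [0]) ! i \<le> map int lam ! i \<and>
           (Suc i < length (map int lam) \<longrightarrow> map int lam ! Suc i \<le> (map int mu @ [0]) ! i)"
      proof (cases "i < n - 1")
        case True
        then show ?thesis using I i' n xs[OF i'] unfolding interlace_def by auto
      next
        case False
        then show ?thesis using i' n xs[OF i'] by auto
      qed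
    qed
  qed
qed

lemma interlace_weight_append_zero:
  assumes n: "1 \<le> n" "length lam = n" "length mu = n - 1" and l1: "\<forall>a\<in>set lam. 1 \<le> a"
    and sl: "sorted_wrt (>) lam" and I: "interlace lam mu"
  shows "interlace_weight t (map int lam) (map int mu @ [0]) = t ^ r_stat lam mu * (1 + t) ^ (s_stat lam mu - r_stat lam mu + 1)"
proof -
  let ?ys = "map int lam" and ?xs = "map int mu @ [0]"
  define P where "P i = (?xs ! i = ?ys ! i)" for i
  define Q where "Q i = (Suc i < length ?ys \<and> ?xs ! i = ?ys ! Suc i)" for i
  have xs: "?xs ! i = (if i < n - 1 then int (mu ! i) else 0)" if "i < n" for i
    using that n by (auto simp: nth_append)
  have lsuc: "lam ! Suc i < lam ! i" if "Suc i < n" for i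
    using sorted_wrt_nth_less[OF sl, of i "Suc i"] that n by simp
  have "interlace_weight t ?ys ?xs = (\<Prod>i<n. if P i then 1 else if Q i then t else 1 + t)"
    unfolding P_def Q_def using interlace_weight_eq_prod[of ?ys ?xs t] n by simp
  also have "\<dots> = t ^ card {i\<in>{..<n}. \<not> P i \<and> Q i} * (1 + t) ^ card {i\<in>{..<n}. \<not> P i \<and> \<not> Q i}"
    by (rule prod_three_valued) simp
  also have A: "{i\<in>{..<n}. \<not> P i \<and> Q i} = {i. i < length mu \<and> mu ! i = lam ! (i + 1)}"
  proof (intro set_eqI iffI)
    fix i assume "i \<in> {i\<in>{..<n}. \<not> P i \<and> Q i}"
    then show "i \<in> {i. i < length mu \<and> mu ! i = lam ! (i + 1)}"
      unfolding P_def Q_def using n xs by (auto split: if_splits)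
  next
    fix i assume i: "i \<in> {i. i < length mu \<and> mu ! i = lam ! (i + 1)}"
    then have "Suc i < n" using n by auto
    then show "i \<in> {i\<in>{..<n}. \<not> P i \<and> Q i}"
      unfolding P_def Q_def using n xs i lsuc[of i] by auto
  qed
  also have B: "{i\<in>{..<n}. \<not> P i \<and> \<not> Q i} = insert (n - 1) {i. i < length mu \<and> mu ! i \<noteq> lam ! i \<and> mu ! i \<noteq> lam ! (i + 1)}"
  proof (intro set_eqI iffI)
    fix i assume i: "i \<in> {i\<in>{..<n}. \<not> P i \<and> \<not> Q i}"
    then show "i \<in> insert (n - 1) {i. i < length mu \<and> mu ! i \<noteq> lam ! i \<and> mu ! i \<noteq> lam ! (i + 1)}"
      unfolding P_def Q_def using n xs by (cases "i < n - 1") auto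
  next
    fix i assume i: "i \<in> insert (n - 1) {i. i < length mu \<and> mu ! i \<noteq> lam ! i \<and> mu ! i \<noteq> lam ! (i + 1)}"
    show "i \<in> {i\<in>{..<n}. \<not> P i \<and> \<not> Q i}"
    proof (cases "i = n - 1")
      case True
      have "lam ! (n - 1) \<in> set lam" using n by simp
      then have "1 \<le> lam ! (n - 1)" using l1 by blast
      then show ?thesis unfolding P_def Q_def using True n xs[of "n - 1"] by auto
    next
      case False
      then show ?thesis using i unfolding P_def Q_def using n xs by auto
    qed
  qed
  also have "card (insert (n - 1) {i. i < length mu \<and> mu ! i \<noteq> lam ! i \<and> mu ! i \<noteq> lam ! (i + 1)})
      = Suc (card {i. i < length mu \<and> mu ! i \<noteq> lam ! i \<and> mu ! i \<noteq> lam ! (i + 1)})"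
    using n by (subst card_insert_disjoint) auto
  also have "card {i. i < length mu \<and> mu ! i \<noteq> lam ! i \<and> mu ! i \<noteq> lam ! (i + 1)} = s_stat lam mu - r_stat lam mu"
  proof -
    have "{i. i < length mu \<and> lam ! i > mu ! i} = {i. i < length mu \<and> mu ! i = lam ! (i + 1)}
        \<union> {i. i < length mu \<and> mu ! i \<noteq> lam ! i \<and> mu ! i \<noteq> lam ! (i + 1)}"
    proof (intro set_eqI iffI)
      fix i assume "i \<in> {i. i < length mu \<and> lam ! i > mu ! i}"
      then show "i \<in> {i. i < length mu \<and> mu ! i = lam ! (i + 1)} \<union> {i. i < length mu \<and> mu ! i \<noteq> lam ! i \<and> mu ! i \<noteq> lam ! (i + 1)}"
        by auto
    next
      fix i assume i: "i \<in> {i. i < length mu \<and> mu ! i = lam ! (i + 1)} \<union> {i. i < length mu \<and> mu ! i \<noteq> lam ! i \<and> mu ! i \<noteq> lam ! (i + 1)}"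
      then have il: "i < length mu" by auto
      then have "mu ! i \<le> lam ! i" using I unfolding interlace_def by auto
      moreover have "Suc i < n" using il n by auto
      ultimately show "i \<in> {i. i < length mu \<and> lam ! i > mu ! i}" using i lsuc[of i] by auto
    qed
    then have "s_stat lam mu = r_stat lam mu + card {i. i < length mu \<and> mu ! i \<noteq> lam ! i \<and> mu ! i \<noteq> lam ! (i + 1)}"
      unfolding s_stat_def r_stat_def by (subst card_Un_disjoint[symmetric]) auto
    then show ?thesis by simp
  qed
  finally show ?thesis unfolding r_stat_def by simp
qed

lemma r_stat_plus_l_stat_le:
  assumes sl: "sorted_wrt (>) lam" and len: "length mu < length lam"
  shows "r_stat lam mu + l_stat lam mu \<le> length mu"
proof -
  let ?RS = "{j. j < length mu \<and> mu ! j = lam ! (j + 1)}"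
  let ?LS = "{j. j < length mu \<and> mu ! j = lam ! j}"
  have "False" if "j < length mu" "mu ! j = lam ! (j + 1)" "mu ! j = lam ! j" for j
    using sorted_wrt_nth_less[OF sl, of j "Suc j"] that len by simp
  then have "?RS \<inter> ?LS = {}" by blast
  moreover have "?RS \<union> ?LS \<subseteq> {..<length mu}" by auto
  ultimately have "card ?RS + card ?LS \<le> length mu"
    by (metis (no_types, lifting) card_Un_disjoint card_lessThan card_mono finite_Un finite_lessThan
        finite_subset)
  then show ?thesis unfolding r_stat_def l_stat_def .
qed

lemma s_stat_eq_length_minus_l_stat:
  assumes "interlace lam mu"
  shows "s_stat lam mu = length mu - l_stat lam mu"
proof -
  let ?LS = "{i. i < length mu \<and> mu ! i = lam ! i}"
  have "{i. i < length mu \<and> lam ! i > mu ! i} = {..<length mu} - ?LS"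
    using assms unfolding interlace_def by (auto simp: order_le_less)
  moreover have "card ({..<length mu} - ?LS) = card {..<length mu} - card ?LS"
    by (rule card_Diff_subset) auto
  ultimately show ?thesis unfolding s_stat_def l_stat_def by simp
qed

lemma interlaces_Cons_iff:
  assumes n: "1 \<le> n" "length lam = n" "length mu = n - 1" and k: "int (lam ! 0) < k"
  shows "interlaces (k # map int mu) (map int lam) \<longleftrightarrow> interlace lam mu"
proof -
  let ?zs = "k # map int mu"
  have len: "length ?zs = length (map int lam)" using n by simp
  show ?thesis
  proof
    assume H: "interlaces ?zs (map int lam)"
    have h: "int (lam ! i) \<le> ?zs ! i \<and> (Suc i < n \<longrightarrow> ?zs ! Suc i \<le> int (lam ! i))" if "i < n" for i
      using H[unfolded interlaces_iff_nth] that n by simp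
    show "interlace lam mu" unfolding interlace_def
    proof (intro allI impI)
      fix i assume i: "i < length mu"
      then have "i < n" "Suc i < n" using n by auto
      then show "mu ! i \<le> lam ! i \<and> lam ! (i + 1) \<le> mu ! i"
        using h[of i] h[of "Suc i"] i by simp
    qed
  next
    assume I: "interlace lam mu"
    show "interlaces ?zs (map int lam)" unfolding interlaces_iff_nth
    proof (rule conjI[OF len], rule allI, rule impI)
      fix i assume i: "i < length (map int lam)"
      show "map int lam ! i \<le> ?zs ! i \<and> (Suc i < length ?zs \<longrightarrow> ?zs ! Suc i \<le> map int lam ! i)"
      proof (cases i)
        case 0
        then show ?thesis using k I n unfolding interlace_def by auto
      next
        case (Suc j)
        then show ?thesis using I n i unfolding interlace_def by auto
      qed
    qed
  qed
qed

lemma interlace_weight_Cons: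
  assumes n: "1 \<le> n" "length lam = n" "length mu = n - 1" and k: "int (lam ! 0) < k"
    and sl: "sorted_wrt (>) lam" and sm: "sorted_wrt (>) mu" and I: "interlace lam mu"
  shows "interlace_weight t (k # map int mu) (map int lam) = t ^ l_stat lam mu * (1 + t) ^ (s_stat lam mu - r_stat lam mu + 1)"
proof -
  let ?zs = "k # map int mu" and ?xs = "map int lam"
  define P where "P i = (?xs ! i = ?zs ! i)" for i
  define Q where "Q i = (Suc i < length ?zs \<and> ?xs ! i = ?zs ! Suc i)" for i
  define RS where "RS = {j. j < length mu \<and> mu ! j = lam ! (j + 1)}"
  define LS where "LS = {j. j < length mu \<and> mu ! j = lam ! j}"
  define B where "B = {i\<in>{..<n}. \<not> P i \<and> \<not> Q i}"
  have msuc: "mu ! Suc i < mu ! i" if "Suc i < n - 1" for i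
    using sorted_wrt_nth_less[OF sm, of i "Suc i"] that n by simp
  have "interlace_weight t ?zs ?xs = (\<Prod>i<n. if P i then 1 else if Q i then t else 1 + t)"
    unfolding P_def Q_def using interlace_weight_eq_prod[of ?zs ?xs t] n by simp
  also have "\<dots> = t ^ card {i\<in>{..<n}. \<not> P i \<and> Q i} * (1 + t) ^ card B"
    unfolding B_def by (rule prod_three_valued) simp
  also have A: "{i\<in>{..<n}. \<not> P i \<and> Q i} = LS"
  proof (intro set_eqI iffI)
    fix i assume "i \<in> {i\<in>{..<n}. \<not> P i \<and> Q i}"
    then show "i \<in> LS" unfolding P_def Q_def LS_def using n by auto
  next
    fix i assume i: "i \<in> LS"
    then have il: "i < n - 1" using n unfolding LS_def by auto
    have "\<not> P i"
    proof (cases i)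
      case 0 then show ?thesis unfolding P_def using k n by auto
    next
      case (Suc j)
      then have "mu ! Suc j < mu ! j" using msuc[of j] il by simp
      then show ?thesis unfolding P_def using i Suc n il unfolding LS_def by auto
    qed
    then show "i \<in> {i\<in>{..<n}. \<not> P i \<and> Q i}" unfolding Q_def using i il n unfolding LS_def by auto
  qed
  finally have weight: "interlace_weight t ?zs ?xs = t ^ card LS * (1 + t) ^ card B" .
  have PS: "{i\<in>{..<n}. P i} = Suc ` RS"
  proof (intro set_eqI iffI)
    fix i assume i: "i \<in> {i\<in>{..<n}. P i}"
    then have "i \<noteq> 0" unfolding P_def using k n by (cases i) auto
    then obtain j where j: "i = Suc j" by (cases i) auto
    then show "i \<in> Suc ` RS" using i n unfolding P_def RS_def by auto
  next
    fix i assume "i \<in> Suc ` RS"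
    then show "i \<in> {i\<in>{..<n}. P i}" unfolding P_def RS_def using n by auto
  qed
  have finLS: "finite LS" unfolding LS_def by simp
  have cPS: "card {i\<in>{..<n}. P i} = card RS" unfolding PS by (rule card_image) simp
  have split: "{..<n} = {i\<in>{..<n}. P i} \<union> (LS \<union> B)"
    unfolding B_def A[symmetric] by auto
  have LSP: "\<And>i. i \<in> LS \<Longrightarrow> \<not> P i" using A by blast
  have disj1: "{i\<in>{..<n}. P i} \<inter> (LS \<union> B) = {}" unfolding B_def using LSP by auto
  have disj2: "LS \<inter> B = {}" unfolding B_def A[symmetric] by auto
  have "n = card RS + (card LS + card B)"
  proof -
    have "card {..<n} = card {i\<in>{..<n}. P i} + card (LS \<union> B)"
      by (subst split, rule card_Un_disjoint[OF _ _ disj1]) (auto simp: finLS B_def)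
    also have "card (LS \<union> B) = card LS + card B"
      by (rule card_Un_disjoint[OF _ _ disj2]) (auto simp: finLS B_def)
    finally show ?thesis using cPS by simp
  qed
  moreover have "r_stat lam mu + l_stat lam mu \<le> n - 1"
    using r_stat_plus_l_stat_le[OF sl, of mu] n by fastforce
  moreover have "s_stat lam mu = n - 1 - l_stat lam mu"
    using s_stat_eq_length_minus_l_stat[OF I] n by simp
  moreover have "r_stat lam mu = card RS" "l_stat lam mu = card LS"
    unfolding r_stat_def l_stat_def RS_def LS_def by auto
  moreover note n(1)
  ultimately have "s_stat lam mu - r_stat lam mu + 1 = card B" "l_stat lam mu = card LS" by linarith+
  then show ?thesis unfolding weight by simp
qed

lemma matrix_element_ephi_plus:
  assumes n: "n \<ge> 1" "length lam = n" "length mu = n - 1"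
    and sl: "sorted_wrt (>) lam" and sm: "sorted_wrt (>) mu"
    and l1: "\<forall>a\<in>set lam. a \<ge> 1" and m1: "\<forall>a\<in>set mu. a \<ge> 1"
  shows "bra mu (ephi_plus t e (psi 0 (ket lam))) =
            (if interlace lam mu \<and> e = int (sum_list lam) - int (sum_list mu)
             then (-1) ^ n * t ^ r_stat lam mu * (1 + t) ^ (s_stat lam mu - r_stat lam mu + 1)
             else 0)"
proof -
  let ?L = "int ` set lam" and ?M = "int ` set mu"
  have cardL: "card ?L = n"
  proof -
    have "card (set (map int lam)) = length (map int lam)"
      by (rule distinct_card[OF sorted_gt_distinct[OF sorted_gt_map_int[OF sl]]])
    then show ?thesis using n by (simp only: set_map length_map)
  qed
  have L0: "0 \<notin> ?L" using l1 by auto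
  have p0: "psi 0 (ket lam) = (\<lambda>U. (-1) ^ n * basis_vec ({..(-1)} \<union> ?L) U)"
  proof -
    have in0: "0 \<in> {..0} \<union> ?L" unfolding atMost_def by simp
    have rem: "{..0} \<union> ?L - {0} = {..(-1)} \<union> ?L" using L0 unfolding atMost_def by auto
    have "{j \<in> {..(-1)} \<union> ?L. 0 < j} = ?L" using l1 unfolding atMost_def by auto
    then have "wsign ({..0} \<union> ?L - {0}) 0 = (-1) ^ n" unfolding rem wsign_def by (simp only: cardL)
    then show ?thesis unfolding ket_eq_basis_vec[OF sl l1] psi_basis_vec using in0 rem by simp
  qed
  have setx: "{..0} \<union> ?M = {..(-1)} \<union> set (map int mu @ [0])" unfolding atMost_def by auto
  have sx: "sorted_wrt (>) (map int mu @ [0])"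
    using sorted_gt_map_int[OF sm] m1 by (auto simp: sorted_wrt_append)
  have "bra mu (ephi_plus t e (psi 0 (ket lam)))
      = (-1) ^ n * ephi_plus t e (basis_vec ({..(-1)} \<union> set (map int lam))) ({..(-1)} \<union> set (map int mu @ [0]))"
    unfolding bra_eq_coeff[OF sm m1] p0 ephi_plus_scale setx by simp
  also have "\<dots> = (-1) ^ n * matrix_rec t (map int mu @ [0]) (map int lam) e"
    by (subst ephi_plus_basis_vec[OF sx sorted_gt_map_int[OF sl]]) (use n l1 m1 in auto)
  also have "\<dots> = (-1) ^ n * (if e = sum_list (map int lam) - sum_list (map int mu @ [0]) \<and> interlaces (map int lam) (map int mu @ [0])
        then interlace_weight t (map int lam) (map int mu @ [0]) else 0)"
    by (subst matrix_rec_closed_form[OF sx sorted_gt_map_int[OF sl]]) (use n in auto)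
  also have "\<dots> = (if interlace lam mu \<and> e = int (sum_list lam) - int (sum_list mu)
             then (-1) ^ n * t ^ r_stat lam mu * (1 + t) ^ (s_stat lam mu - r_stat lam mu + 1)
             else 0)"
  proof -
    have s1: "sum_list (map int lam) = int (sum_list lam)" by (simp add: sum_list_of_nat)
    have s2: "sum_list (map int mu @ [0]) = int (sum_list mu)" by (simp add: sum_list_of_nat)
    show ?thesis unfolding s1 s2 interlaces_append_zero_iff[OF n l1]
      using interlace_weight_append_zero[OF n l1 sl, of t] by simp
  qed
  finally show ?thesis .
qed

lemma interlace_below_hd:
  assumes n: "1 \<le> n" "length lam = n" "length mu = n - 1"
    and sl: "sorted_wrt (>) lam" and I: "interlace lam mu" and a: "a \<in> set mu"
  shows "a \<le> lam ! 0"
proof -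
  obtain i where i: "i < length mu" "mu ! i = a" using a by (auto simp: in_set_conv_nth)
  have "mu ! i \<le> lam ! i" using I i unfolding interlace_def by auto
  moreover have "lam ! i \<le> lam ! 0" using sorted_gt_nth_le_hd[OF sl] i n by simp
  ultimately show ?thesis using i by simp
qed

text \<open>The site \<open>k\<close> lies above every particle of \<open>\<lambda>\<close>, so in an interlacing
  arrangement it can only be the top entry.\<close>
lemma not_interlaces_insert_top:
  assumes n: "1 \<le> n" "length lam = n" "length mu = n - 1" and k: "int (lam ! 0) < k"
    and sl: "sorted_wrt (>) lam" and sm: "sorted_wrt (>) mu" and nI: "\<not> interlace lam mu"
    and szs: "sorted_wrt (>) zs" and setz: "set zs = insert k (int ` set mu)"
    and kM: "k \<notin> int ` set mu"
  shows "\<not> interlaces zs (map int lam)"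
proof
  assume H: "interlaces zs (map int lam)"
  have lenz: "length zs = n" using interlaces_length[OF H] n by simp
  obtain j where j: "j < length zs" "zs ! j = k"
    using setz by (metis in_set_conv_nth insertI1)
  have j0: "j = 0"
  proof (rule ccontr)
    assume "j \<noteq> 0"
    then obtain i where i: "j = Suc i" by (cases j) auto
    then have "zs ! Suc i \<le> int (lam ! i)" and "lam ! i \<le> lam ! 0"
      using H[unfolded interlaces_iff_nth] j lenz n sorted_gt_nth_le_hd[OF sl, of i] by auto
    then show False using j i k by simp
  qed
  obtain ws where zsw: "zs = k # ws" using j j0 by (cases zs) auto
  have "set ws = int ` set mu" using setz zsw kM sorted_gt_distinct[OF szs] by auto
  then have "ws = map int mu"
    using sorted_gt_set_unique[of ws "map int mu"] szs zsw sorted_gt_map_int[OF sm] by simp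
  then show False using H zsw interlaces_Cons_iff[OF n k] nI by simp
qed

lemma matrix_element_ephi_minus:
  assumes n: "n \<ge> 1" "length lam = n" "length mu = n - 1"
    and sl: "sorted_wrt (>) lam" and sm: "sorted_wrt (>) mu"
    and l1: "\<forall>a\<in>set lam. a \<ge> 1" and m1: "\<forall>a\<in>set mu. a \<ge> 1"
    and k: "k > int (lam ! 0)"
  shows "bra mu (psi k (ephi_minus t e (ket lam))) =
            (if interlace lam mu \<and> e = int (sum_list lam) - int (sum_list mu) - k
             then t ^ l_stat lam mu * (1 + t) ^ (s_stat lam mu - r_stat lam mu + 1)
             else 0)"
proof -
  let ?M = "int ` set mu"
  define W where "W = ephi_minus t e (basis_vec ({..0} \<union> int ` set lam))"
  have k0: "0 < k" using k by simp
  have LHS: "bra mu (psi k (ephi_minus t e (ket lam)))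
      = (if k \<in> ?M then 0 else wsign ({..0} \<union> ?M) k * W (insert k ({..0} \<union> ?M)))"
    unfolding bra_eq_coeff[OF sm m1] ket_eq_basis_vec[OF sl l1] W_def psi_def using k0 by simp
  have mu_below: "int a < k" if "interlace lam mu" "a \<in> set mu" for a
    using interlace_below_hd[OF n sl that] k by simp
  show ?thesis
  proof (cases "k \<in> ?M")
    case True
    then show ?thesis unfolding LHS using mu_below by auto
  next
    case kM: False
    define zs where "zs = rev (sorted_list_of_set (insert k ?M))"
    have szs: "sorted_wrt (>) zs" unfolding zs_def
      using strict_sorted_list_of_set[of "insert k ?M"] by (simp only: sorted_wrt_rev)
    have setz: "set zs = insert k ?M"
      unfolding zs_def set_rev by (rule set_sorted_list_of_set) simp
    have lenz: "length zs = n"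
    proof -
      have "card ?M = n - 1"
        using distinct_card[OF sorted_gt_distinct[OF sorted_gt_map_int[OF sm]]] n by simp
      then show ?thesis unfolding zs_def length_rev length_sorted_list_of_set using kM n by simp
    qed
    have "W (insert k ({..0} \<union> ?M)) = matrix_rec t (map int lam) zs (- e)"
    proof -
      have "insert k ({..0} \<union> ?M) = {..0} \<union> set zs" unfolding setz by auto
      moreover have "ephi_minus t (- (- e)) (basis_vec ({..0} \<union> set (map int lam))) ({..0} \<union> set zs)
          = matrix_rec t (map int lam) zs (- e)"
        by (rule ephi_minus_basis_vec[OF sorted_gt_map_int[OF sl] szs])
           (use n lenz setz k0 l1 m1 in auto)
      ultimately show ?thesis unfolding W_def by simp
    qed
    also have "\<dots> = (if - e = sum_list zs - sum_list (map int lam) \<and> interlaces zs (map int lam)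
        then interlace_weight t zs (map int lam) else 0)"
      by (rule matrix_rec_closed_form[OF sorted_gt_map_int[OF sl] szs]) (use n lenz in simp)
    finally have W: "W (insert k ({..0} \<union> ?M)) = \<dots>" .
    show ?thesis
    proof (cases "interlace lam mu")
      case I: True
      have zs: "zs = k # map int mu"
        using sorted_gt_set_unique[OF szs, of "k # map int mu"] setz mu_below[OF I] sorted_gt_map_int[OF sm]
        by auto
      have "wsign ({..0} \<union> ?M) k = 1"
        using mu_below[OF I] k0 by (intro wsign_eq_1_if_none_above) force
      moreover have "sum_list zs - sum_list (map int lam) = k + int (sum_list mu) - int (sum_list lam)"
        unfolding zs by (simp add: sum_list_of_nat)
      ultimately show ?thesis
        unfolding LHS W using kM I interlaces_Cons_iff[OF n k] interlace_weight_Cons[OF n k sl sm I, of t]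
        by (auto simp: zs)
    next
      case False
      then show ?thesis
        unfolding LHS W using not_interlaces_insert_top[OF n k sl sm False szs setz kM] by simp
    qed
  qed
qed

theorem mainTheorem1:
  fixes lam mu :: "nat list" and n :: nat and k :: int and t :: complex
  assumes "n \<ge> 1"
    and "length lam = n" and "length mu = n - 1"
    and "sorted_wrt (>) lam" and "sorted_wrt (>) mu"
    and "\<forall>a\<in>set lam. a \<ge> 1" and "\<forall>a\<in>set mu. a \<ge> 1"
    and "k > int (lam ! 0)"
  shows "(\<forall>e::int. bra mu (ephi_plus t e (psi 0 (ket lam))) =
            (if interlace lam mu \<and> e = int (sum_list lam) - int (sum_list mu)
             then (-1) ^ n * t ^ r_stat lam mu * (1 + t) ^ (s_stat lam mu - r_stat lam mu + 1)
             else 0))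
       \<and> (\<forall>e::int. bra mu (psi k (ephi_minus t e (ket lam))) =
            (if interlace lam mu \<and> e = int (sum_list lam) - int (sum_list mu) - k
             then t ^ l_stat lam mu * (1 + t) ^ (s_stat lam mu - r_stat lam mu + 1)
             else 0))"
  using matrix_element_ephi_plus[OF assms(1-7), of t] matrix_element_ephi_minus[OF assms(1-8), of t] by blast

end
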